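(* Let $\mathbf a\in C^1([0,T]\times\mathbb R^N;\mathbb R^N)$ be bounded and satisfy the OSLC condition with $\alpha\in L^1_+(0,T)$, and let $u\in C^2([0,T]\times\mathbb R^N)$ be a classical solution of $\partial_tu+\mathbf a\cdot\nabla u=0$. Then for every $0\le t\le T$, every $x_0\in\mathbb R^N$ and every $R>0$, $$\int_{B(x_0,R)}\sum_{i=1}^N\Bigl|\frac{\partial u}{\partial x_i}(t,x)\Bigr|dx\le\sqrt N\,e^{(N-1)\int_0^t\alpha(s)ds}\int_{B(x_0,R+t\|\mathbf a\|_\infty)}\sum_{i=1}^N\Bigl|\frac{\partial u}{\partial x_i}(0,x)\Bigr|dx.$$
   Context: OSLC: $\langle \mathbf a(t,y)-\mathbf a(t,x),y-x\rangle\le\alpha(t)|y-x|^2$ for all $(t,x,y)$ (a.e.), with $\alpha\ge0$, $\alpha\in L^1(0,T)$. *)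

theory Defs
  imports "HOL-Analysis.Analysis"
begin

definition has_C1_derivative_on ::
  "('a::real_normed_vector \<Rightarrow> 'b::real_normed_vector) \<Rightarrow> ('a \<Rightarrow> ('a \<Rightarrow>\<^sub>L 'b)) \<Rightarrow> 'a set \<Rightarrow> bool" where
  "has_C1_derivative_on f Df S \<longleftrightarrow>
     (\<forall>p\<in>S. (f has_derivative blinfun_apply (Df p)) (at p within S)) \<and> continuous_on S Df"

definition C1_on :: "('a::real_normed_vector \<Rightarrow> 'b::real_normed_vector) \<Rightarrow> 'a set \<Rightarrow> bool" where
  "C1_on f S \<longleftrightarrow> (\<exists>Df. has_C1_derivative_on f Df S)"

end

theory Submission
  imports Defs
begin

text \<open>Let \<open>W = \<nabla>\<^sub>x u\<close> and \<open>A = D\<^sub>x a\<close>. Differentiating the transport equation in \<open>x\<close> gives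
  \<open>(\<partial>\<^sub>t + a \<cdot> \<nabla>) W = -A\<^sup>T W\<close>, so the smoothed norm \<open>F = sqrt (|W|\<^sup>2 + \<epsilon>\<^sup>2)\<close> satisfies
  \<open>(\<partial>\<^sub>t + a \<cdot> \<nabla>) F + F div a = F tr A - \<langle>A W, W\<rangle> / F\<close>. The one-sided Lipschitz condition
  says that \<open>\<alpha> I - A\<close> is positive semidefinite, whence \<open>tr A |W|\<^sup>2 - \<langle>A W, W\<rangle> \<le> (N - 1) \<alpha> |W|\<^sup>2\<close>
  and the right-hand side is at most \<open>\<alpha> ((N - 1) F + \<epsilon>)\<close>.
  Multiply \<open>F\<close> by a \<open>C\<^sup>1\<close> cutoff of the backward cone \<open>|x - x\<^sub>0| \<le> R + (t - s) \<parallel>a\<parallel>\<^sub>\<infinity>\<close>, which does not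
  increase along characteristics, and integrate in \<open>x\<close>: the divergence term integrates to zero,
  so \<open>\<Phi>(s) = \<integral> cutoff \<cdot> F\<close> satisfies \<open>\<Phi>' \<le> \<alpha> ((N - 1) \<Phi> + C \<epsilon>)\<close> and Gronwall's inequality
  applies. Letting \<open>\<epsilon> \<rightarrow> 0\<close>, letting the cutoff tend to the indicator of the ball, and comparing the
  \<open>l\<^sup>1\<close> and Euclidean norms of \<open>W\<close> (which costs \<open>sqrt N\<close>) gives the estimate.\<close>

section \<open>A \<open>C\<^sup>1\<close> ramp\<close>

lemma has_real_derivative_max_0_sq: "((\<lambda>y. (max 0 y)\<^sup>2) has_real_derivative 2 * max 0 y) (at y)"
proof -
  consider "y < 0" | "y = 0" | "y > 0" by linarith
  then show ?thesis
  proof cases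
    case 1
    have "\<forall>\<^sub>F z in nhds y. 0 = (max 0 z)\<^sup>2"
      using eventually_nhds_in_open[of "{..<0}" y] 1 by (auto elim!: eventually_mono)
    moreover have "((\<lambda>z. 0) has_real_derivative 0) (at y)"
      by simp
    ultimately show ?thesis
      using 1 by (subst (asm) DERIV_cong_ev[OF refl _ refl]) (auto simp: max_def)
  next
    case 2
    have "((\<lambda>z::real. (max 0 z)\<^sup>2 / z) \<longlongrightarrow> 0) (at 0)"
    proof (rule Lim_null_comparison)
      show "\<forall>\<^sub>F z in at 0. norm ((max 0 z)\<^sup>2 / z) \<le> \<bar>z\<bar>"
        by (auto simp: max_def power2_eq_square abs_mult divide_simps)
    qed (auto intro!: tendsto_eq_intros)
    then show ?thesis
      using 2 by (simp add: has_field_derivative_iff)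
  next
    case 3
    have "\<forall>\<^sub>F z in nhds y. z\<^sup>2 = (max 0 z)\<^sup>2"
      using eventually_nhds_in_open[of "{0<..}" y] 3 by (auto elim!: eventually_mono)
    moreover have "((\<lambda>z. z\<^sup>2) has_real_derivative 2 * y) (at y)"
      by (auto intro!: derivative_eq_intros)
    ultimately show ?thesis
      using 3 by (subst (asm) DERIV_cong_ev[OF refl _ refl]) (auto simp: max_def)
  qed
qed

text \<open>A \<open>C\<^sup>1\<close> quadratic spline rising from \<open>0\<close> on \<open>y \<le> 0\<close> to \<open>1\<close> on \<open>y \<ge> 2 h\<close>.\<close>

definition ramp :: "real \<Rightarrow> real \<Rightarrow> real" where
  "ramp h y = ((max 0 y)\<^sup>2 - 2 * (max 0 (y - h))\<^sup>2 + (max 0 (y - 2 * h))\<^sup>2) / (2 * h\<^sup>2)"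

definition ramp' :: "real \<Rightarrow> real \<Rightarrow> real" where
  "ramp' h y = (max 0 y - 2 * max 0 (y - h) + max 0 (y - 2 * h)) / h\<^sup>2"

lemma ramp_has_real_derivative:
  assumes "0 < h"
  shows "(ramp h has_real_derivative ramp' h y) (at y)"
proof -
  have shifted: "((\<lambda>y. (max 0 (y - c))\<^sup>2) has_real_derivative 2 * max 0 (y - c) * 1) (at y)" for c
    by (rule DERIV_chain2[OF has_real_derivative_max_0_sq]) (auto intro!: derivative_eq_intros)
  have "ramp h = (\<lambda>y. ((max 0 (y - 0))\<^sup>2 - 2 * (max 0 (y - h))\<^sup>2 + (max 0 (y - 2 * h))\<^sup>2) / (2 * h\<^sup>2))"
    by (simp add: ramp_def fun_eq_iff)
  moreover have "((\<lambda>y. ((max 0 (y - 0))\<^sup>2 - 2 * (max 0 (y - h))\<^sup>2 + (max 0 (y - 2 * h))\<^sup>2) / (2 * h\<^sup>2))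
      has_real_derivative (2 * max 0 (y - 0) * 1 - 2 * (2 * max 0 (y - h) * 1) + 2 * max 0 (y - 2 * h) * 1) / (2 * h\<^sup>2)) (at y)"
    by (intro DERIV_cdivide DERIV_add DERIV_diff DERIV_cmult shifted)
  moreover have "(2 * max 0 (y - 0) * 1 - 2 * (2 * max 0 (y - h) * 1) + 2 * max 0 (y - 2 * h) * 1) / (2 * h\<^sup>2) = ramp' h y"
    using assms by (simp add: ramp'_def field_simps)
  ultimately show ?thesis by simp
qed

lemma continuous_on_ramp: "0 < h \<Longrightarrow> continuous_on A (ramp h)"
  using ramp_has_real_derivative by (meson DERIV_isCont continuous_at_imp_continuous_on)

lemma continuous_on_ramp': "0 < h \<Longrightarrow> continuous_on A (ramp' h)"
  unfolding ramp'_def[abs_def] by (intro continuous_intros) auto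

lemma ramp_eq_0: "y \<le> 0 \<Longrightarrow> 0 < h \<Longrightarrow> ramp h y = 0"
  by (simp add: ramp_def max_def)

lemma ramp_eq_1: "2 * h \<le> y \<Longrightarrow> 0 < h \<Longrightarrow> ramp h y = 1"
  by (simp add: ramp_def max_def power2_eq_square field_simps)

lemma ramp_bounds:
  assumes "0 < h"
  shows "0 \<le> ramp h y \<and> ramp h y \<le> 1"
proof -
  consider "y \<le> 0" | "0 < y" "y \<le> h" | "h < y" "y \<le> 2 * h" | "2 * h < y" by linarith
  then show ?thesis
  proof cases
    case 2
    then have "y\<^sup>2 \<le> h\<^sup>2"
      by (intro power_mono) auto
    then have "y\<^sup>2 \<le> 2 * h\<^sup>2"
      by (smt (verit) zero_le_power2)
    moreover have "ramp h y = y\<^sup>2 / (2 * h\<^sup>2)"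
      using 2 assms by (simp add: ramp_def max_def)
    ultimately show ?thesis
      using assms by (simp add: pos_divide_le_eq)
  next
    case 3
    then have "(2 * h - y)\<^sup>2 \<le> h\<^sup>2"
      by (intro power_mono) auto
    then have "(2 * h - y)\<^sup>2 \<le> 2 * h\<^sup>2"
      by (smt (verit) zero_le_power2)
    moreover have "ramp h y = 1 - (2 * h - y)\<^sup>2 / (2 * h\<^sup>2)"
      using 3 assms by (simp add: ramp_def max_def field_simps power2_eq_square)
    ultimately show ?thesis
      using assms by (simp add: pos_divide_le_eq)
  qed (use assms ramp_eq_0 ramp_eq_1 in auto)
qed

lemma ramp'_nonneg: "0 < h \<Longrightarrow> 0 \<le> ramp' h y"
  unfolding ramp'_def by (intro divide_nonneg_nonneg) (auto simp: max_def)

lemma ramp'_eq_0: "0 < h \<Longrightarrow> y \<le> 0 \<or> 2 * h \<le> y \<Longrightarrow> ramp' h y = 0"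
  unfolding ramp'_def by (auto simp: max_def)

section \<open>Gronwall's inequality\<close>

lemma field_le_epsilon_mult:
  fixes x y z :: real
  assumes "\<And>e. 0 < e \<Longrightarrow> x \<le> y + e * z" "0 \<le> z"
  shows "x \<le> y"
proof (rule field_le_epsilon)
  fix e :: real
  assume "0 < e"
  then have "x \<le> y + (e / (z + 1)) * z"
    using assms by (intro assms(1)) simp
  also have "(e / (z + 1)) * z \<le> e"
    using \<open>0 < e\<close> assms(2) by (simp add: divide_simps)
  finally show "x \<le> y + e" by simp
qed

lemma discrete_gronwall:
  fixes \<phi> A :: "nat \<Rightarrow> real"
  assumes step: "\<And>k. k < m \<Longrightarrow> \<phi> (Suc k) \<le> \<phi> k * (1 + c * (A (Suc k) - A k)) + (A (Suc k) - A k) * d"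
    and mono: "\<And>k. k < m \<Longrightarrow> A k \<le> A (Suc k)"
    and "A 0 = 0" "0 \<le> c" "0 \<le> d" "0 \<le> \<phi> 0"
  shows "\<phi> m \<le> exp (c * A m) * (\<phi> 0 + d * A m)"
  using step mono
proof (induction m)
  case 0
  then show ?case using \<open>A 0 = 0\<close> by simp
next
  case (Suc m)
  define b where "b = A (Suc m) - A m"
  have IH: "\<phi> m \<le> exp (c * A m) * (\<phi> 0 + d * A m)"
    using Suc by simp
  have "A m = (\<Sum>k<m. A (Suc k) - A k)"
    using sum_lessThan_telescope[of A m] \<open>A 0 = 0\<close> by simp
  also have "\<dots> \<ge> 0"
    using Suc.prems(2) by (intro sum_nonneg) simp
  finally have "0 \<le> A m" .
  moreover have "0 \<le> b"
    using Suc.prems(2) by (simp add: b_def)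
  ultimately have "0 \<le> A (Suc m)"
    by (simp add: b_def)
  have "0 \<le> exp (c * A m) * (\<phi> 0 + d * A m)" and "1 \<le> exp (c * A (Suc m))"
    using assms(4-6) \<open>0 \<le> A m\<close> \<open>0 \<le> A (Suc m)\<close> by auto
  have "\<phi> (Suc m) \<le> \<phi> m * (1 + c * b) + b * d"
    using Suc.prems(1) by (simp add: b_def)
  also have "\<dots> \<le> exp (c * A m) * (\<phi> 0 + d * A m) * exp (c * b) + exp (c * A (Suc m)) * (b * d)"
  proof (rule add_mono)
    show "\<phi> m * (1 + c * b) \<le> exp (c * A m) * (\<phi> 0 + d * A m) * exp (c * b)"
      using IH \<open>0 \<le> exp (c * A m) * (\<phi> 0 + d * A m)\<close> \<open>0 \<le> b\<close> assms(4)
      by (intro mult_mono exp_ge_add_one_self) auto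
    show "b * d \<le> exp (c * A (Suc m)) * (b * d)"
      using mult_right_mono[OF \<open>1 \<le> exp (c * A (Suc m))\<close>, of "b * d"] \<open>0 \<le> b\<close> assms(5) by simp
  qed
  also have "\<dots> = exp (c * A (Suc m)) * (\<phi> 0 + d * A (Suc m))"
    by (simp add: b_def algebra_simps flip: exp_add)
  finally show ?case .
qed

text \<open>No differentiability of \<open>A\<close> is needed: below, \<open>A\<close> is the primitive of a merely
  integrable function.\<close>

lemma uniform_mesh_oscillation_le:
  fixes \<Phi> :: "real \<Rightarrow> real"
  assumes "0 \<le> t" "continuous_on {0..t} \<Phi>" "0 < \<eta>"
  obtains m :: nat where "0 < m"
    "\<And>r s. r \<in> {0..t} \<Longrightarrow> s \<in> {0..t} \<Longrightarrow> \<bar>r - s\<bar> \<le> t / m \<Longrightarrow> \<Phi> r \<le> \<Phi> s + \<eta>"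
proof -
  obtain \<delta> where "\<delta> > 0" and \<delta>: "\<And>x y. x \<in> {0..t} \<Longrightarrow> y \<in> {0..t} \<Longrightarrow> dist y x < \<delta> \<Longrightarrow> dist (\<Phi> y) (\<Phi> x) < \<eta>"
    using compact_uniformly_continuous[OF assms(2)] \<open>0 < \<eta>\<close> unfolding uniformly_continuous_on_def
    by (metis compact_Icc)
  obtain m :: nat where m: "t / \<delta> < real m"
    using reals_Archimedean2 by blast
  moreover have "0 \<le> t / \<delta>"
    using \<open>0 \<le> t\<close> \<open>\<delta> > 0\<close> by simp
  ultimately have "0 < m"
    by linarith
  then have "t / real m < \<delta>"
    using m \<open>\<delta> > 0\<close> by (simp add: field_simps)
  then have "\<Phi> r \<le> \<Phi> s + \<eta>" if "r \<in> {0..t}" "s \<in> {0..t}" "\<bar>r - s\<bar> \<le> t / m" for r s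
    using \<delta>[of s r] that by (auto simp: dist_real_def)
  with \<open>0 < m\<close> show ?thesis
    using that by blast
qed

lemma gronwall_increments:
  fixes \<Phi> A :: "real \<Rightarrow> real"
  assumes "0 \<le> t" and cont: "continuous_on {0..t} \<Phi>" and "0 \<le> \<Phi> 0"
    and mono: "\<And>s1 s2. 0 \<le> s1 \<Longrightarrow> s1 \<le> s2 \<Longrightarrow> s2 \<le> t \<Longrightarrow> A s1 \<le> A s2"
    and "A 0 = 0" "0 \<le> c" "0 \<le> d"
    and incr: "\<And>s1 s2 B. 0 \<le> s1 \<Longrightarrow> s1 \<le> s2 \<Longrightarrow> s2 \<le> t \<Longrightarrow> (\<forall>r\<in>{s1..s2}. \<Phi> r \<le> B) \<Longrightarrow>
       \<Phi> s2 - \<Phi> s1 \<le> (A s2 - A s1) * (c * B + d)"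
  shows "\<Phi> t \<le> exp (c * A t) * (\<Phi> 0 + d * A t)"
proof (rule field_le_epsilon_mult)
  show "0 \<le> exp (c * A t) * (c * A t)"
    using mono[of 0 t] assms by simp
  fix \<eta> :: real
  assume "0 < \<eta>"
  obtain m :: nat where "0 < m"
    and osc: "\<And>r s. r \<in> {0..t} \<Longrightarrow> s \<in> {0..t} \<Longrightarrow> \<bar>r - s\<bar> \<le> t / m \<Longrightarrow> \<Phi> r \<le> \<Phi> s + \<eta>"
    using uniform_mesh_oscillation_le[OF \<open>0 \<le> t\<close> cont \<open>0 < \<eta>\<close>] by blast
  define s where "s k = real k * t / real m" for k :: nat
  have s_range: "0 \<le> s k \<and> s k \<le> t" if "k \<le> m" for k
    using that \<open>0 \<le> t\<close> \<open>0 < m\<close> by (auto simp: s_def field_simps mult_left_mono)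
  have s_step: "s (Suc k) - s k = t / real m" for k
    by (simp add: s_def diff_divide_distrib[symmetric] algebra_simps)
  have "s k \<le> s (Suc k)" for k
    unfolding s_def using \<open>0 \<le> t\<close> by (intro divide_right_mono mult_right_mono) auto
  have "\<Phi> (s m) \<le> exp (c * A (s m)) * (\<Phi> (s 0) + (d + c * \<eta>) * A (s m))"
  proof (rule discrete_gronwall)
    fix k
    assume "k < m"
    then have range: "0 \<le> s k" "s k \<le> s (Suc k)" "s (Suc k) \<le> t"
      using s_range[of k] s_range[of "Suc k"] \<open>s k \<le> s (Suc k)\<close> by auto
    have "\<forall>r\<in>{s k..s (Suc k)}. \<Phi> r \<le> \<Phi> (s k) + \<eta>"
    proof
      fix r
      assume "r \<in> {s k..s (Suc k)}"
      then show "\<Phi> r \<le> \<Phi> (s k) + \<eta>"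
        using s_step[of k] range by (intro osc) auto
    qed
    from incr[OF range this]
    show "\<Phi> (s (Suc k)) \<le> \<Phi> (s k) * (1 + c * (A (s (Suc k)) - A (s k))) + (A (s (Suc k)) - A (s k)) * (d + c * \<eta>)"
      by (simp add: algebra_simps)
    show "A (s k) \<le> A (s (Suc k))"
      using mono range by blast
  qed (use assms \<open>0 < \<eta>\<close> in \<open>auto simp: s_def\<close>)
  moreover have "s 0 = 0" "s m = t"
    using \<open>0 < m\<close> by (auto simp: s_def)
  ultimately show "\<Phi> t \<le> exp (c * A t) * (\<Phi> 0 + d * A t) + \<eta> * (exp (c * A t) * (c * A t))"
    by (simp add: algebra_simps)
qed

lemma integral_nonneg_off_negligible:
  fixes f :: "real \<Rightarrow> real"
  assumes "negligible E" "\<And>x. x \<in> {a..b} - E \<Longrightarrow> 0 \<le> f x" "f integrable_on {a..b}"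
  shows "0 \<le> integral {a..b} f"
proof -
  have "integral {a..b} f = integral {a..b} (\<lambda>x. if x \<in> E then 0 else f x)"
    by (rule integral_spike[OF assms(1)]) auto
  also have "0 \<le> \<dots>"
    using assms by (intro integral_nonneg integrable_spike[OF assms(3,1)]) auto
  finally show ?thesis .
qed

lemma fundamental_theorem_of_calculus_le_off_negligible:
  fixes \<Phi> \<Phi>' g :: "real \<Rightarrow> real"
  assumes "a \<le> b" "negligible E"
    and deriv: "\<And>r. r \<in> {a..b} \<Longrightarrow> (\<Phi> has_real_derivative \<Phi>' r) (at r within {a..b})"
    and "g integrable_on {a..b}" and le: "\<And>r. r \<in> {a..b} - E \<Longrightarrow> \<Phi>' r \<le> g r"
  shows "\<Phi> b - \<Phi> a \<le> integral {a..b} g"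
proof -
  have "(\<Phi>' has_integral (\<Phi> b - \<Phi> a)) {a..b}"
    using deriv by (intro fundamental_theorem_of_calculus[OF \<open>a \<le> b\<close>])
      (simp add: has_real_derivative_iff_has_vector_derivative)
  moreover have "((\<lambda>r. if r \<in> E then \<Phi>' r else g r) has_integral integral {a..b} g) {a..b}"
    using integrable_integral[OF \<open>g integrable_on {a..b}\<close>]
    by (rule has_integral_spike[OF \<open>negligible E\<close>, rotated]) simp
  ultimately show ?thesis
    by (rule has_integral_le) (use le in auto)
qed

lemma gronwall_derivative_ae:
  fixes \<Phi> \<Phi>' \<alpha> :: "real \<Rightarrow> real"
  assumes "0 \<le> t" "negligible E" "0 \<le> c" "0 \<le> d" "0 \<le> \<Phi> 0"
    and deriv: "\<And>s. s \<in> {0..t} \<Longrightarrow> (\<Phi> has_real_derivative \<Phi>' s) (at s within {0..t})"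
    and \<alpha>_integrable: "\<alpha> integrable_on {0..t}"
    and \<alpha>_nonneg: "\<And>s. s \<in> {0..t} - E \<Longrightarrow> 0 \<le> \<alpha> s"
    and bound: "\<And>s. s \<in> {0..t} - E \<Longrightarrow> \<Phi>' s \<le> \<alpha> s * (c * \<Phi> s + d)"
  shows "\<Phi> t \<le> exp (c * integral {0..t} \<alpha>) * (\<Phi> 0 + d * integral {0..t} \<alpha>)"
proof (rule gronwall_increments[where A = "\<lambda>s. integral {0..s} \<alpha>"])
  have integrable: "\<alpha> integrable_on {s1..s2}" if "0 \<le> s1" "s2 \<le> t" for s1 s2
    using integrable_on_subinterval[OF \<alpha>_integrable] that by auto
  have increment: "integral {0..s2} \<alpha> - integral {0..s1} \<alpha> = integral {s1..s2} \<alpha>"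
    if "0 \<le> s1" "s1 \<le> s2" "s2 \<le> t" for s1 s2
    using Henstock_Kurzweil_Integration.integral_combine[OF that(1,2) integrable[of 0 s2]] that
    by simp
  have increment_nonneg: "0 \<le> integral {s1..s2} \<alpha>" if "0 \<le> s1" "s2 \<le> t" for s1 s2
    using that by (intro integral_nonneg_off_negligible[OF \<open>negligible E\<close> _ integrable] \<alpha>_nonneg) auto
  show "integral {0..s1} \<alpha> \<le> integral {0..s2} \<alpha>" if "0 \<le> s1" "s1 \<le> s2" "s2 \<le> t" for s1 s2
    using increment[OF that] increment_nonneg[of s1 s2] that by simp
  show "continuous_on {0..t} \<Phi>"
    by (rule DERIV_continuous_on[OF deriv])
  fix s1 s2 B
  assume s12: "0 \<le> s1" "s1 \<le> s2" "s2 \<le> t" and B: "\<forall>r\<in>{s1..s2}. \<Phi> r \<le> B"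
  have "\<Phi> s2 - \<Phi> s1 \<le> integral {s1..s2} (\<lambda>r. \<alpha> r * (c * B + d))"
  proof (rule fundamental_theorem_of_calculus_le_off_negligible[OF s12(2) \<open>negligible E\<close>])
    show "(\<Phi> has_real_derivative \<Phi>' r) (at r within {s1..s2})" if "r \<in> {s1..s2}" for r
      using that s12 by (intro DERIV_subset[OF deriv]) auto
    show "(\<lambda>r. \<alpha> r * (c * B + d)) integrable_on {s1..s2}"
      using s12 by (intro integrable_on_mult_left integrable) auto
    fix r
    assume "r \<in> {s1..s2} - E"
    then have r: "r \<in> {0..t} - E"
      using s12 by auto
    have "\<Phi>' r \<le> \<alpha> r * (c * \<Phi> r + d)"
      by (rule bound[OF r])
    also have "\<dots> \<le> \<alpha> r * (c * B + d)"
      using B \<open>r \<in> {s1..s2} - E\<close> \<alpha>_nonneg[OF r] \<open>0 \<le> c\<close> by (intro mult_left_mono add_right_mono) auto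
    finally show "\<Phi>' r \<le> \<alpha> r * (c * B + d)" .
  qed
  then show "\<Phi> s2 - \<Phi> s1 \<le> (integral {0..s2} \<alpha> - integral {0..s1} \<alpha>) * (c * B + d)"
    using increment[OF s12] by simp
qed (use assms in auto)

section \<open>Linear algebra\<close>

lemma discriminant_le_of_nonneg:
  fixes a b c :: real
  assumes "\<And>x y. 0 \<le> a * x\<^sup>2 + 2 * b * x * y + c * y\<^sup>2"
  shows "b\<^sup>2 \<le> a * c"
proof (cases "a = 0")
  case True
  have "b = 0"
  proof (rule ccontr)
    assume "b \<noteq> 0"
    then have "2 * b * (- (c + 1) / (2 * b)) = - (c + 1)"
      by (simp add: field_simps)
    then show False
      using assms[of "- (c + 1) / (2 * b)" 1] True by simp
  qed
  then show ?thesis using True by simp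
next
  case False
  then have "0 < a"
    using assms[of 1 0] by simp
  moreover have "0 \<le> a * (a * c - b\<^sup>2)"
    using assms[of "- b" a] by (simp add: power2_eq_square algebra_simps)
  ultimately show ?thesis
    by (simp add: zero_le_mult_iff)
qed

lemma psd_form_cauchy_schwarz:
  fixes Q :: "'a::real_inner \<Rightarrow> 'a"
  assumes "linear Q" and psd: "\<And>v. 0 \<le> inner (Q v) v"
  shows "\<bar>inner (Q x) y + inner (Q y) x\<bar> \<le> 2 * sqrt (inner (Q x) x) * sqrt (inner (Q y) y)"
proof -
  have "((inner (Q x) y + inner (Q y) x) / 2)\<^sup>2 \<le> inner (Q x) x * inner (Q y) y"
  proof (rule discriminant_le_of_nonneg)
    fix \<xi> \<zeta> :: real
    have "0 \<le> inner (Q (\<xi> *\<^sub>R x + \<zeta> *\<^sub>R y)) (\<xi> *\<^sub>R x + \<zeta> *\<^sub>R y)"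
      by (rule psd)
    also have "\<dots> = inner (Q x) x * \<xi>\<^sup>2 + 2 * ((inner (Q x) y + inner (Q y) x) / 2) * \<xi> * \<zeta> + inner (Q y) y * \<zeta>\<^sup>2"
      by (simp add: linear_add[OF \<open>linear Q\<close>] linear_scale[OF \<open>linear Q\<close>] inner_add_left inner_add_right
          power2_eq_square algebra_simps)
    finally show "0 \<le> inner (Q x) x * \<xi>\<^sup>2 + 2 * ((inner (Q x) y + inner (Q y) x) / 2) * \<xi> * \<zeta> + inner (Q y) y * \<zeta>\<^sup>2" .
  qed
  then have "\<bar>(inner (Q x) y + inner (Q y) x) / 2\<bar> \<le> sqrt (inner (Q x) x * inner (Q y) y)"
    by (metis real_sqrt_abs real_sqrt_le_mono)
  then have "\<bar>inner (Q x) y + inner (Q y) x\<bar> \<le> 2 * sqrt (inner (Q x) x * inner (Q y) y)"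
    by (simp add: field_simps)
  then show ?thesis
    by (simp add: real_sqrt_mult)
qed

lemma quadratic_form_symmetric_expansion:
  fixes Q :: "real^'n \<Rightarrow> real^'n"
  assumes lin: "linear Q"
  shows "inner (Q w) w = (\<Sum>i\<in>UNIV. \<Sum>j\<in>UNIV.
    w$i * w$j * ((inner (Q (axis i 1)) (axis j 1) + inner (Q (axis j 1)) (axis i 1)) / 2))"
proof -
  define q where "q i j = inner (Q (axis i 1)) (axis j 1)" for i j
  have expansion: "(\<Sum>i\<in>UNIV. w$i *\<^sub>R axis i 1) = w"
    using basis_expansion[of w] by (simp add: scalar_mult_eq_scaleR)
  have "inner (Q w) w = inner (Q (\<Sum>i\<in>UNIV. w$i *\<^sub>R axis i 1)) (\<Sum>j\<in>UNIV. w$j *\<^sub>R axis j 1)"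
    by (simp only: expansion)
  also have "\<dots> = (\<Sum>i\<in>UNIV. \<Sum>j\<in>UNIV. w$i * w$j * q j i)"
    by (simp add: linear_sum[OF lin] linear_scale[OF lin] inner_sum_left inner_sum_right q_def
        sum_distrib_left algebra_simps)
  also have "\<dots> = (\<Sum>i\<in>UNIV. \<Sum>j\<in>UNIV. w$i * w$j * ((q i j + q j i) / 2))"
  proof -
    have "(\<Sum>i\<in>UNIV. \<Sum>j\<in>UNIV. w$i * w$j * q j i) = (\<Sum>i\<in>UNIV. \<Sum>j\<in>UNIV. w$i * w$j * q i j)"
      by (subst sum.swap) (simp add: mult.commute)
    then show ?thesis
      by (simp add: sum.distrib algebra_simps sum_divide_distrib[symmetric] add_divide_distrib)
  qed
  finally show ?thesis
    by (simp add: q_def)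
qed

lemma psd_form_le_trace:
  fixes Q :: "real^'n \<Rightarrow> real^'n"
  assumes lin: "linear Q" and psd: "\<And>v. 0 \<le> inner (Q v) v"
  shows "inner (Q w) w \<le> (\<Sum>i\<in>UNIV. inner (Q (axis i 1)) (axis i 1)) * (norm w)\<^sup>2"
proof -
  define q where "q i j = inner (Q (axis i 1)) (axis j 1)" for i j
  define r where "r i = sqrt (q i i)" for i
  have q_nonneg: "0 \<le> q i i" for i
    using psd by (simp add: q_def)
  have "inner (Q w) w = (\<Sum>i\<in>UNIV. \<Sum>j\<in>UNIV. w$i * w$j * ((q i j + q j i) / 2))"
    unfolding q_def by (rule quadratic_form_symmetric_expansion[OF lin])
  also have "\<dots> \<le> (\<Sum>i\<in>UNIV. \<Sum>j\<in>UNIV. (\<bar>w$i\<bar> * r i) * (\<bar>w$j\<bar> * r j))"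
  proof (intro sum_mono)
    fix i j
    have "\<bar>q i j + q j i\<bar> \<le> 2 * r i * r j"
      using psd_form_cauchy_schwarz[OF lin psd, of "axis i 1" "axis j 1"]
      by (simp add: q_def r_def inner_commute)
    have "w$i * w$j * ((q i j + q j i) / 2) \<le> \<bar>w$i * w$j * ((q i j + q j i) / 2)\<bar>"
      by (rule abs_ge_self)
    also have "\<dots> = \<bar>w$i\<bar> * \<bar>w$j\<bar> * (\<bar>q i j + q j i\<bar> / 2)"
      by (simp add: abs_mult)
    also have "\<dots> \<le> \<bar>w$i\<bar> * \<bar>w$j\<bar> * (r i * r j)"
      using \<open>\<bar>q i j + q j i\<bar> \<le> 2 * r i * r j\<close> by (intro mult_left_mono) auto
    finally show "w$i * w$j * ((q i j + q j i) / 2) \<le> (\<bar>w$i\<bar> * r i) * (\<bar>w$j\<bar> * r j)"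
      by (simp add: algebra_simps)
  qed
  also have "\<dots> = (\<Sum>i\<in>UNIV. \<bar>w$i\<bar> * r i)\<^sup>2"
    by (simp add: power2_eq_square sum_product)
  also have "\<dots> \<le> (\<Sum>i\<in>UNIV. \<bar>w$i\<bar>\<^sup>2) * (\<Sum>i\<in>UNIV. (r i)\<^sup>2)"
    by (rule Cauchy_Schwarz_ineq_sum)
  also have "\<dots> = (norm w)\<^sup>2 * (\<Sum>i\<in>UNIV. q i i)"
    using q_nonneg by (simp add: r_def norm_vec_def L2_set_def sum_nonneg)
  finally show ?thesis
    by (simp add: q_def mult.commute)
qed

text \<open>The symmetric part of \<open>A\<close> is bounded by \<open>c\<close>, so \<open>c I - A\<close> is positive semidefinite.\<close>

lemma trace_form_bound:
  fixes A :: "real^'n \<Rightarrow> real^'n"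
  assumes lin: "linear A" and bound: "\<And>v. inner (A v) v \<le> c * (norm v)\<^sup>2"
  shows "(\<Sum>i\<in>UNIV. inner (A (axis i 1)) (axis i 1)) * (norm w)\<^sup>2 - inner (A w) w
           \<le> (real CARD('n) - 1) * c * (norm w)\<^sup>2"
proof -
  define Q where "Q v = c *\<^sub>R v - A v" for v
  have "linear Q"
    unfolding Q_def by (intro linear_compose_sub linear_scale_self lin)
  moreover have "0 \<le> inner (Q v) v" for v
    using bound[of v] by (simp add: Q_def inner_diff_left power2_norm_eq_inner)
  ultimately have "inner (Q w) w \<le> (\<Sum>i\<in>UNIV. inner (Q (axis i 1)) (axis i 1)) * (norm w)\<^sup>2"
    by (rule psd_form_le_trace)
  then show ?thesis
    by (simp add: Q_def inner_diff_left sum_subtractf power2_norm_eq_inner algebra_simps)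
qed

lemma l1_norm_le_sqrt_card_norm:
  fixes v :: "real^'n"
  shows "(\<Sum>i\<in>UNIV. \<bar>v$i\<bar>) \<le> sqrt (real CARD('n)) * norm v"
proof -
  have "(\<Sum>i\<in>UNIV. 1 * \<bar>v$i\<bar>)\<^sup>2 \<le> (\<Sum>i\<in>(UNIV::'n set). 1\<^sup>2) * (\<Sum>i\<in>UNIV. \<bar>v$i\<bar>\<^sup>2)"
    by (rule Cauchy_Schwarz_ineq_sum)
  also have "\<dots> = real CARD('n) * (norm v)\<^sup>2"
    by (simp add: norm_vec_def L2_set_def sum_nonneg)
  finally have "(\<Sum>i\<in>UNIV. \<bar>v$i\<bar>) \<le> sqrt (real CARD('n) * (norm v)\<^sup>2)"
    by (simp add: real_le_rsqrt)
  then show ?thesis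
    by (simp add: real_sqrt_mult)
qed

lemma linear_zero_pair_eq_inner:
  fixes L :: "real \<times> (real^'n) \<Rightarrow> real"
  assumes "linear L"
  shows "L (0, y) = inner (\<Sum>k\<in>UNIV. L (0, axis k 1) *\<^sub>R axis k 1) y"
proof -
  have "(0, y) = (\<Sum>k\<in>UNIV. y$k *\<^sub>R (0::real, axis k (1::real)))"
    using basis_expansion[of y] by (simp add: prod_eq_iff fst_sum snd_sum scalar_mult_eq_scaleR)
  then have "L (0, y) = (\<Sum>k\<in>UNIV. y$k * L (0, axis k 1))"
    by (simp only: linear_sum[OF assms] linear_scale[OF assms] real_scaleR_def)
  also have "\<dots> = inner (\<Sum>k\<in>UNIV. L (0, axis k 1) *\<^sub>R axis k 1) y"
    by (simp add: inner_sum_left inner_axis' mult.commute)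
  finally show ?thesis .
qed

lemma smoothed_trace_inequality:
  fixes w2 tr q \<alpha> \<epsilon> N :: real
  assumes "0 \<le> w2" "0 < \<epsilon>" "0 \<le> \<alpha>"
    and "tr * w2 - q \<le> (N - 1) * \<alpha> * w2" and "tr \<le> N * \<alpha>"
  shows "sqrt (w2 + \<epsilon>\<^sup>2) * tr - q / sqrt (w2 + \<epsilon>\<^sup>2) \<le> (N - 1) * \<alpha> * sqrt (w2 + \<epsilon>\<^sup>2) + \<alpha> * \<epsilon>"
proof -
  define F where "F = sqrt (w2 + \<epsilon>\<^sup>2)"
  have F2: "F\<^sup>2 = w2 + \<epsilon>\<^sup>2"
    using assms by (simp add: F_def)
  have "\<epsilon> \<le> F"
    using assms by (simp add: F_def real_le_rsqrt)
  then have "0 < F"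
    using \<open>0 < \<epsilon>\<close> by simp
  have "(F * tr - q / F) * F = F\<^sup>2 * tr - q"
    using \<open>0 < F\<close> by (simp add: field_simps power2_eq_square)
  also have "\<dots> = \<epsilon>\<^sup>2 * tr + (tr * w2 - q)"
    using F2 by (simp add: algebra_simps)
  also have "\<dots> \<le> \<epsilon>\<^sup>2 * (N * \<alpha>) + (N - 1) * \<alpha> * w2"
    using assms by (intro add_mono mult_left_mono) auto
  also have "\<dots> = (N - 1) * \<alpha> * F\<^sup>2 + \<alpha> * \<epsilon> * \<epsilon>"
    using F2 by (simp add: algebra_simps power2_eq_square)
  also have "\<dots> \<le> (N - 1) * \<alpha> * F\<^sup>2 + \<alpha> * \<epsilon> * F"
    using \<open>\<epsilon> \<le> F\<close> assms by (intro add_left_mono mult_left_mono) auto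
  also have "\<dots> = ((N - 1) * \<alpha> * F + \<alpha> * \<epsilon>) * F"
    by (simp add: algebra_simps power2_eq_square)
  finally show ?thesis
    using \<open>0 < F\<close> by (simp add: F_def [symmetric] mult_le_cancel_right)
qed

section \<open>Calculus in several variables\<close>

lemma has_real_derivative_along_line:
  fixes f :: "'a::real_normed_vector \<Rightarrow> real"
  assumes "(f has_derivative D) (at (c + s *\<^sub>R h))"
  shows "((\<lambda>s. f (c + s *\<^sub>R h)) has_real_derivative D h) (at s)"
proof -
  have "((\<lambda>s. c + s *\<^sub>R h) has_derivative (\<lambda>s. s *\<^sub>R h)) (at s)"
    by (auto intro!: derivative_eq_intros)
  from has_derivative_compose[OF this assms]
  show ?thesis
    unfolding has_field_derivative_def
    by (rule has_derivative_eq_rhs) (simp add: fun_eq_iff linear_scale[OF has_derivative_linear[OF assms]])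
qed

lemma has_real_derivative_derivative_along_line:
  fixes Df :: "'a::real_normed_vector \<Rightarrow> 'a \<Rightarrow>\<^sub>L real"
  assumes "(Df has_derivative blinfun_apply (D2f (c + \<tau> *\<^sub>R k))) (at (c + \<tau> *\<^sub>R k))"
  shows "((\<lambda>\<tau>. Df (c + \<tau> *\<^sub>R k) h) has_real_derivative D2f (c + \<tau> *\<^sub>R k) k h) (at \<tau>)"
proof -
  have "((\<lambda>\<tau>. c + \<tau> *\<^sub>R k) has_derivative (\<lambda>\<tau>. \<tau> *\<^sub>R k)) (at \<tau>)"
    by (auto intro!: derivative_eq_intros)
  from has_derivative_compose[OF this assms]
  have "((\<lambda>\<tau>. Df (c + \<tau> *\<^sub>R k) h) has_derivative (\<lambda>\<sigma>. Df (c + \<tau> *\<^sub>R k) 0 + D2f (c + \<tau> *\<^sub>R k) (\<sigma> *\<^sub>R k) h)) (at \<tau>)"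
    by (intro blinfun.FDERIV) (auto intro!: derivative_eq_intros)
  then show ?thesis
    unfolding has_field_derivative_def
    by (rule has_derivative_eq_rhs) (auto simp: fun_eq_iff blinfun.scaleR_right blinfun.scaleR_left)
qed

lemma second_difference_mean_value:
  fixes f :: "'a::real_normed_vector \<Rightarrow> real"
  assumes df: "\<And>q. q \<in> U \<Longrightarrow> (f has_derivative blinfun_apply (Df q)) (at q)"
    and d2f: "\<And>q. q \<in> U \<Longrightarrow> (Df has_derivative blinfun_apply (D2f q)) (at q)"
    and U: "cball p (\<rho> * (norm h + norm k)) \<subseteq> U" and "0 < \<rho>"
  obtains q where "dist q p \<le> \<rho> * (norm h + norm k)"
    "f (p + \<rho> *\<^sub>R h + \<rho> *\<^sub>R k) - f (p + \<rho> *\<^sub>R h) - f (p + \<rho> *\<^sub>R k) + f p = \<rho>\<^sup>2 * D2f q k h"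
proof -
  have near: "dist (p + \<sigma> *\<^sub>R h + \<tau> *\<^sub>R k) p \<le> \<rho> * (norm h + norm k)"
    if "\<sigma> \<in> {0..\<rho>}" "\<tau> \<in> {0..\<rho>}" for \<sigma> \<tau>
  proof -
    have "dist (p + \<sigma> *\<^sub>R h + \<tau> *\<^sub>R k) p \<le> \<sigma> * norm h + \<tau> * norm k"
      using norm_triangle_ineq[of "\<sigma> *\<^sub>R h" "\<tau> *\<^sub>R k"] that by (simp add: dist_norm)
    also have "\<dots> \<le> \<rho> * (norm h + norm k)"
      using that by (simp add: distrib_left add_mono mult_right_mono)
    finally show ?thesis .
  qed
  then have inU: "p + \<sigma> *\<^sub>R h + \<tau> *\<^sub>R k \<in> U" if "\<sigma> \<in> {0..\<rho>}" "\<tau> \<in> {0..\<rho>}" for \<sigma> \<tau>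
    using U that by (auto simp: dist_commute)
  define g where "g \<sigma> = f (p + \<rho> *\<^sub>R k + \<sigma> *\<^sub>R h) - f (p + \<sigma> *\<^sub>R h)" for \<sigma>
  obtain \<sigma> where \<sigma>: "0 < \<sigma>" "\<sigma> < \<rho>"
    and g: "g \<rho> - g 0 = (\<rho> - 0) * (Df (p + \<rho> *\<^sub>R k + \<sigma> *\<^sub>R h) h - Df (p + \<sigma> *\<^sub>R h) h)"
  proof (atomize_elim, rule MVT2[OF \<open>0 < \<rho>\<close>])
    fix x
    assume "0 \<le> x" "x \<le> \<rho>"
    then have "p + \<rho> *\<^sub>R k + x *\<^sub>R h \<in> U" "p + x *\<^sub>R h \<in> U"
      using inU[of x \<rho>] inU[of x 0] \<open>0 < \<rho>\<close> by (simp_all add: algebra_simps)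
    then show "(g has_real_derivative (Df (p + \<rho> *\<^sub>R k + x *\<^sub>R h) h - Df (p + x *\<^sub>R h) h)) (at x)"
      unfolding g_def by (intro DERIV_diff has_real_derivative_along_line df)
  qed
  define m where "m \<tau> = Df (p + \<sigma> *\<^sub>R h + \<tau> *\<^sub>R k) h" for \<tau>
  obtain \<tau> where \<tau>: "0 < \<tau>" "\<tau> < \<rho>"
    and m: "m \<rho> - m 0 = (\<rho> - 0) * D2f (p + \<sigma> *\<^sub>R h + \<tau> *\<^sub>R k) k h"
  proof (atomize_elim, rule MVT2[OF \<open>0 < \<rho>\<close>])
    fix x
    assume "0 \<le> x" "x \<le> \<rho>"
    then have "p + \<sigma> *\<^sub>R h + x *\<^sub>R k \<in> U"
      using inU[of \<sigma> x] \<sigma> by simp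
    then show "(m has_real_derivative D2f (p + \<sigma> *\<^sub>R h + x *\<^sub>R k) k h) (at x)"
      unfolding m_def by (intro has_real_derivative_derivative_along_line d2f)
  qed
  have "f (p + \<rho> *\<^sub>R h + \<rho> *\<^sub>R k) - f (p + \<rho> *\<^sub>R h) - f (p + \<rho> *\<^sub>R k) + f p = g \<rho> - g 0"
    by (simp add: g_def algebra_simps)
  also have "\<dots> = \<rho> * (m \<rho> - m 0)"
    unfolding g m_def by (simp add: algebra_simps)
  also have "\<dots> = \<rho>\<^sup>2 * D2f (p + \<sigma> *\<^sub>R h + \<tau> *\<^sub>R k) k h"
    unfolding m by (simp add: power2_eq_square)
  finally show ?thesis
    using that[OF near[of \<sigma> \<tau>]] \<sigma> \<tau> by simp
qed

lemma exists_pos_mult_less: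
  fixes r c :: real
  assumes "0 < r" "0 \<le> c"
  shows "\<exists>\<rho>>0. \<rho> * c < r"
proof (intro exI conjI)
  show "0 < r / (c + 1)"
    using assms by simp
  show "r / (c + 1) * c < r"
    using assms by (simp add: field_simps)
qed

lemma blinfun_apply2_diff_le:
  fixes B C :: "'a::real_normed_vector \<Rightarrow>\<^sub>L 'b::real_normed_vector \<Rightarrow>\<^sub>L real"
  shows "\<bar>B y x - C y x\<bar> \<le> norm (B - C) * norm y * norm x"
proof -
  have "\<bar>B y x - C y x\<bar> = \<bar>(B - C) y x\<bar>"
    by (simp add: blinfun.diff_left)
  also have "\<dots> \<le> norm ((B - C) y) * norm x"
    using norm_blinfun[of "(B - C) y" x] by simp
  also have "\<dots> \<le> norm (B - C) * norm y * norm x"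
    by (intro mult_right_mono norm_blinfun) auto
  finally show ?thesis .
qed

lemma second_derivative_symmetric:
  fixes f :: "'a::real_normed_vector \<Rightarrow> real"
  assumes "open U"
    and df: "\<And>q. q \<in> U \<Longrightarrow> (f has_derivative blinfun_apply (Df q)) (at q)"
    and d2f: "\<And>q. q \<in> U \<Longrightarrow> (Df has_derivative blinfun_apply (D2f q)) (at q)"
    and cont: "continuous_on U D2f" and "p \<in> U"
  shows "D2f p k h = D2f p h k"
proof -
  have "\<bar>D2f p k h - D2f p h k\<bar> \<le> 0"
  proof (rule field_le_epsilon_mult)
    fix e :: real
    assume "0 < e"
    obtain d where "d > 0" and d: "\<And>q. q \<in> U \<Longrightarrow> dist q p < d \<Longrightarrow> dist (D2f q) (D2f p) < e"
      using cont \<open>p \<in> U\<close> \<open>0 < e\<close> unfolding continuous_on_iff by metis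
    obtain r where "r > 0" "ball p r \<subseteq> U"
      using \<open>open U\<close> \<open>p \<in> U\<close> open_contains_ball by blast
    obtain \<rho> where "0 < \<rho>" and small: "\<rho> * (norm h + norm k) < min d r"
      using exists_pos_mult_less[of "min d r" "norm h + norm k"] \<open>d > 0\<close> \<open>r > 0\<close> by auto
    then have U1: "cball p (\<rho> * (norm h + norm k)) \<subseteq> U"
      using \<open>ball p r \<subseteq> U\<close> by (auto simp: dist_commute)
    then have U2: "cball p (\<rho> * (norm k + norm h)) \<subseteq> U"
      by (metis add.commute)
    obtain q1 where q1: "dist q1 p \<le> \<rho> * (norm h + norm k)"
        "f (p + \<rho> *\<^sub>R h + \<rho> *\<^sub>R k) - f (p + \<rho> *\<^sub>R h) - f (p + \<rho> *\<^sub>R k) + f p = \<rho>\<^sup>2 * D2f q1 k h"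
      by (rule second_difference_mean_value[OF df d2f U1 \<open>0 < \<rho>\<close>])
    obtain q2 where q2: "dist q2 p \<le> \<rho> * (norm k + norm h)"
        "f (p + \<rho> *\<^sub>R k + \<rho> *\<^sub>R h) - f (p + \<rho> *\<^sub>R k) - f (p + \<rho> *\<^sub>R h) + f p = \<rho>\<^sup>2 * D2f q2 h k"
      by (rule second_difference_mean_value[OF df d2f U2 \<open>0 < \<rho>\<close>])
    have "D2f q1 k h = D2f q2 h k"
      using q1(2) q2(2) \<open>0 < \<rho>\<close> by (simp add: algebra_simps)
    have close: "\<bar>D2f p y x - D2f q y x\<bar> \<le> e * norm y * norm x"
      if "dist q p \<le> \<rho> * (norm h + norm k)" for q x y
    proof -
      have "q \<in> U" "dist q p < d"
        using that small \<open>ball p r \<subseteq> U\<close> by (auto simp: dist_commute)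
      then have "norm (D2f p - D2f q) \<le> e"
        using d by (metis dist_commute dist_norm less_imp_le)
      then have "norm (D2f p - D2f q) * norm y * norm x \<le> e * norm y * norm x"
        by (intro mult_right_mono) auto
      then show ?thesis
        using blinfun_apply2_diff_le[where B = "D2f p" and C = "D2f q" and y = y and x = x] by linarith
    qed
    have "\<bar>D2f p k h - D2f q1 k h\<bar> \<le> e * norm k * norm h"
      by (rule close[OF q1(1)])
    moreover have "\<bar>D2f p h k - D2f q2 h k\<bar> \<le> e * norm h * norm k"
      using q2(1) by (intro close) (metis add.commute)
    moreover have "e * norm h * norm k = e * norm k * norm h"
      by simp
    ultimately show "\<bar>D2f p k h - D2f p h k\<bar> \<le> 0 + e * (2 * norm k * norm h)"
      using \<open>D2f q1 k h = D2f q2 h k\<close> by linarith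
  qed simp
  then show ?thesis by simp
qed

lemma second_derivative_symmetric_strip:
  fixes u :: "real \<times> 'a::euclidean_space \<Rightarrow> real"
  assumes "0 < T"
    and du: "has_C1_derivative_on u Du ({0..T} \<times> UNIV)"
    and d2u: "has_C1_derivative_on Du D2u ({0..T} \<times> UNIV)"
    and p: "p \<in> {0..T} \<times> UNIV"
  shows "D2u p k h = D2u p h k"
proof -
  define S where "S = ({0..T} \<times> UNIV :: (real \<times> 'a) set)"
  define U where "U = ({0<..<T} \<times> UNIV :: (real \<times> 'a) set)"
  have "open U" "U \<subseteq> S"
    unfolding U_def S_def by (auto intro: open_Times)
  then have at_U: "at q within S = at q" if "q \<in> U" for q
    using at_within_open_subset that by metis
  have cont: "continuous_on S D2u"
    using d2u by (simp add: has_C1_derivative_on_def S_def)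
  have "q \<in> {q \<in> S. D2u q k h - D2u q h k = 0}" if "q \<in> U" for q
  proof -
    have "D2u q k h = D2u q h k"
    proof (rule second_derivative_symmetric[OF \<open>open U\<close> _ _ _ that])
      fix q
      assume "q \<in> U"
      then have "q \<in> {0..T} \<times> UNIV"
        using \<open>U \<subseteq> S\<close> by (auto simp: S_def)
      then have "(u has_derivative blinfun_apply (Du q)) (at q within S)"
        "(Du has_derivative blinfun_apply (D2u q)) (at q within S)"
        using du d2u unfolding has_C1_derivative_on_def S_def by blast+
      then show "(u has_derivative blinfun_apply (Du q)) (at q)"
        "(Du has_derivative blinfun_apply (D2u q)) (at q)"
        using at_U[OF \<open>q \<in> U\<close>] by simp_all
    next
      show "continuous_on U D2u"
        using cont \<open>U \<subseteq> S\<close> by (rule continuous_on_subset)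
    qed
    then show ?thesis
      using that \<open>U \<subseteq> S\<close> by auto
  qed
  moreover have "closed {q \<in> S. D2u q k h - D2u q h k = 0}"
    using cont by (intro continuous_closed_preimage_constant continuous_intros)
      (auto simp: S_def intro: closed_Times)
  ultimately have "closure U \<subseteq> {q \<in> S. D2u q k h - D2u q h k = 0}"
    by (intro closure_minimal) auto
  moreover have "closure U = S"
    unfolding U_def S_def using \<open>0 < T\<close> by (simp add: closure_Times)
  ultimately show ?thesis
    using p by (auto simp: S_def)
qed

lemma one_sided_lipschitz_derivative:
  fixes f :: "'a::real_inner \<Rightarrow> 'a"
  assumes der: "(f has_derivative f') (at x)"
    and osl: "\<And>x y. inner (f y - f x) (y - x) \<le> c * (norm (y - x))\<^sup>2"
  shows "inner (f' v) v \<le> c * (norm v)\<^sup>2"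
proof (rule ccontr)
  assume "\<not> ?thesis"
  then have pos: "0 < inner (f' v) v - c * (norm v)\<^sup>2"
    by simp
  define g where "g h = inner (f (x + h *\<^sub>R v)) v - c * (norm v)\<^sup>2 * h" for h
  have "((\<lambda>h. x + h *\<^sub>R v) has_derivative (\<lambda>h. h *\<^sub>R v)) (at 0)"
    by (auto intro!: derivative_eq_intros)
  then have "((\<lambda>h. f (x + h *\<^sub>R v)) has_derivative (\<lambda>h. f' (h *\<^sub>R v))) (at 0)"
    using has_derivative_compose[of "\<lambda>h. x + h *\<^sub>R v" _ 0 UNIV f f'] der by simp
  then have "((\<lambda>h. f (x + h *\<^sub>R v)) has_derivative (\<lambda>h. h *\<^sub>R f' v)) (at 0)"
    by (simp add: linear_scale[OF has_derivative_linear[OF der]])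
  then have "(g has_real_derivative (inner (f' v) v - c * (norm v)\<^sup>2)) (at 0)"
    unfolding g_def[abs_def] has_field_derivative_def
    by (auto intro!: derivative_eq_intros simp: fun_eq_iff algebra_simps)
  from DERIV_pos_inc_right[OF this pos]
  obtain d where "d > 0" and d: "\<And>h. h > 0 \<Longrightarrow> h < d \<Longrightarrow> g 0 < g h"
    by auto
  define h where "h = d / 2"
  have "0 < h" "h < d"
    using \<open>d > 0\<close> by (auto simp: h_def)
  have "h * inner (f (x + h *\<^sub>R v) - f x) v = inner (f (x + h *\<^sub>R v) - f x) ((x + h *\<^sub>R v) - x)"
    by simp
  also have "\<dots> \<le> c * (norm ((x + h *\<^sub>R v) - x))\<^sup>2"
    by (rule osl)
  also have "\<dots> = h * (c * h * (norm v)\<^sup>2)"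
    using \<open>0 < h\<close> by (simp add: power2_eq_square)
  finally have "inner (f (x + h *\<^sub>R v) - f x) v \<le> c * h * (norm v)\<^sup>2"
    using \<open>0 < h\<close> by simp
  then have "g h \<le> g 0"
    by (simp add: g_def inner_diff_left algebra_simps)
  with d[OF \<open>0 < h\<close> \<open>h < d\<close>] show False
    by simp
qed

section \<open>Integration\<close>

lemma has_field_derivative_integral_translate:
  fixes f :: "'a::euclidean_space \<Rightarrow> real"
  assumes deriv: "\<And>x. (f has_derivative f' x) (at x)" and cont: "continuous_on UNIV (\<lambda>x. f' x e)"
  shows "((\<lambda>h. integral (cbox a b) (\<lambda>x. f (x + h *\<^sub>R e))) has_field_derivative integral (cbox a b) (\<lambda>x. f' x e)) (at 0)"
proof -
  have f_cont: "continuous_on UNIV f"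
    using deriv by (metis continuous_at_imp_continuous_on differentiable_def differentiable_imp_continuous_within)
  have "((\<lambda>h. integral (cbox a b) (\<lambda>x. f (x + h *\<^sub>R e))) has_field_derivative integral (cbox a b) (\<lambda>x. f' (x + 0 *\<^sub>R e) e))
      (at 0 within {-1..1})"
  proof (rule leibniz_rule_field_derivative)
    show "((\<lambda>h. f (x + h *\<^sub>R e)) has_field_derivative f' (x + h *\<^sub>R e) e) (at h within {-1..1})" for h x
      by (rule has_field_derivative_at_within, rule has_real_derivative_along_line, rule deriv)
    show "(\<lambda>x. f (x + h *\<^sub>R e)) integrable_on cbox a b" for h
      by (intro integrable_continuous continuous_on_compose2[OF f_cont]) (auto intro!: continuous_intros)
    have "continuous_on ({-1..1} \<times> cbox a b) (\<lambda>p. (\<lambda>x. f' x e) (snd p + fst p *\<^sub>R e))"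
      by (rule continuous_on_compose2[OF cont]) (auto intro!: continuous_intros)
    then show "continuous_on ({-1..1} \<times> cbox a b) (\<lambda>(h, x). f' (x + h *\<^sub>R e) e)"
      by (simp add: split_beta)
  qed auto
  moreover have "at 0 within {-1..1} = at (0::real)"
    by (rule at_within_interior) simp
  ultimately show ?thesis
    by simp
qed

lemma cball_subset_cbox_cart:
  fixes c :: "real^'n"
  shows "cball c r \<subseteq> cbox (c - (\<chi> j. r)) (c + (\<chi> j. r))"
proof
  fix x
  assume "x \<in> cball c r"
  then have "\<bar>(x - c) $ j\<bar> \<le> r" for j
    using component_le_norm_cart[of "x - c" j] by (simp add: dist_norm norm_minus_commute)
  then show "x \<in> cbox (c - (\<chi> j. r)) (c + (\<chi> j. r))"
    unfolding mem_box_cart by (auto simp: abs_le_iff algebra_simps)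
qed

lemma integral_translate_of_support:
  fixes f :: "'a::euclidean_space \<Rightarrow> real"
  assumes "f integrable_on cbox a b" and zero: "\<And>y. y \<notin> cbox a b \<Longrightarrow> f y = 0"
    and sub: "(\<lambda>x. x - v) ` cbox a b \<subseteq> S"
  shows "integral S (\<lambda>x. f (x + v)) = integral (cbox a b) f"
proof -
  have "((\<lambda>x. f (1 *\<^sub>R x + v)) has_integral (1 / (\<bar>1\<bar> ^ DIM('a))) *\<^sub>R integral (cbox a b) f)
      ((\<lambda>x. (1 / 1) *\<^sub>R x + - ((1 / 1) *\<^sub>R v)) ` cbox a b)"
    using assms(1) by (intro has_integral_affinity) auto
  then have "((\<lambda>x. f (x + v)) has_integral integral (cbox a b) f) ((\<lambda>x. x - v) ` cbox a b)"
    by simp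
  moreover have "f (x + v) = 0" if "x \<notin> (\<lambda>x. x - v) ` cbox a b" for x
    using that by (intro zero) (metis add_diff_cancel image_eqI)
  ultimately have "((\<lambda>x. f (x + v)) has_integral integral (cbox a b) f) S"
    by (rule has_integral_on_superset[OF _ _ sub])
  then show ?thesis
    by (rule integral_unique)
qed

text \<open>The integrals of the translates \<open>f (x + h e\<^sub>i)\<close> over the cube do not depend on \<open>h\<close>;
  differentiate under the integral sign at \<open>h = 0\<close>.\<close>

lemma integral_partial_derivative_eq_0:
  fixes f :: "real^'n \<Rightarrow> real" and f' :: "real^'n \<Rightarrow> real^'n \<Rightarrow> real"
  assumes deriv: "\<And>x. (f has_derivative f' x) (at x)"
    and cont: "continuous_on UNIV (\<lambda>x. f' x (axis i 1))"
    and supp: "\<And>x. \<rho> \<le> norm (x - c) \<Longrightarrow> f x = 0"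
  shows "integral (cbox (c - (\<chi> j. \<rho> + 1)) (c + (\<chi> j. \<rho> + 1))) (\<lambda>x. f' x (axis i 1)) = 0"
proof -
  define e :: "real^'n" where "e = axis i 1"
  define B where "B = cbox (c - (\<chi> j. \<rho> + 1)) (c + (\<chi> j. \<rho> + 1))"
  define B0 where "B0 = cbox (c - (\<chi> j. \<rho>)) (c + (\<chi> j. \<rho>))"
  have f_cont: "continuous_on UNIV f"
    using deriv by (metis continuous_at_imp_continuous_on differentiable_def differentiable_imp_continuous_within)
  have shift: "integral B (\<lambda>x. f (x + h *\<^sub>R e)) = integral B0 f" if "h \<in> {-1..1}" for h
    unfolding B0_def
  proof (rule integral_translate_of_support)
    show "f integrable_on cbox (c - (\<chi> j. \<rho>)) (c + (\<chi> j. \<rho>))"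
      by (intro integrable_continuous continuous_on_subset[OF f_cont]) auto
    show "f y = 0" if "y \<notin> cbox (c - (\<chi> j. \<rho>)) (c + (\<chi> j. \<rho>))" for y
    proof -
      have "y \<notin> cball c \<rho>"
        using that cball_subset_cbox_cart[of c \<rho>] by auto
      then show ?thesis
        by (intro supp) (simp add: dist_norm norm_minus_commute)
    qed
    show "(\<lambda>x. x - h *\<^sub>R e) ` cbox (c - (\<chi> j. \<rho>)) (c + (\<chi> j. \<rho>)) \<subseteq> B"
    proof
      fix y
      assume "y \<in> (\<lambda>x. x - h *\<^sub>R e) ` cbox (c - (\<chi> j. \<rho>)) (c + (\<chi> j. \<rho>))"
      then obtain x where "x \<in> cbox (c - (\<chi> j. \<rho>)) (c + (\<chi> j. \<rho>))" "y = x - h *\<^sub>R e"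
        by auto
      moreover have "\<bar>(h *\<^sub>R e)$j\<bar> \<le> 1" for j
        using that by (auto simp: e_def axis_def)
      ultimately show "y \<in> B"
        unfolding B_def mem_box_cart by (auto simp: algebra_simps) (smt (verit))+
    qed
  qed
  have "((\<lambda>h. integral B (\<lambda>x. f (x + h *\<^sub>R e))) has_field_derivative integral B (\<lambda>x. f' x e)) (at 0)"
    unfolding B_def e_def by (rule has_field_derivative_integral_translate[OF deriv cont])
  moreover have "((\<lambda>h. integral B (\<lambda>x. f (x + h *\<^sub>R e))) has_field_derivative 0) (at 0)"
    by (rule has_field_derivative_transform_within_open[of "\<lambda>h. integral B0 f" 0 0 "{-1<..<1}"])
      (auto simp: shift)
  ultimately show ?thesis
    by (simp add: B_def e_def DERIV_unique)
qed

lemma set_integrable_ball: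
  fixes f :: "real^'n \<Rightarrow> real"
  assumes "continuous_on (cball c r) f"
  shows "set_integrable lborel (ball c r) f"
proof -
  have "set_integrable lborel (cball c r) f"
    unfolding set_integrable_def by (rule borel_integrable_compact[OF compact_cball assms])
  then show ?thesis
    by (rule set_integrable_subset) auto
qed

lemma set_integral_ball_eq_integral:
  fixes f :: "real^'n \<Rightarrow> real"
  assumes "continuous_on (cball c r) f"
  shows "(LINT x : ball c r | lborel. f x) = integral (ball c r) f"
  using set_borel_integral_eq_integral(2)[OF set_integrable_ball[OF assms]] .

lemma integrable_on_ball:
  fixes f :: "real^'n \<Rightarrow> real"
  assumes "continuous_on (cball c r) f"
  shows "f integrable_on ball c r"
  using set_borel_integral_eq_integral(1)[OF set_integrable_ball[OF assms]] .

lemma eventually_indicator_shrinking_ball: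
  assumes "0 < R"
  shows "\<forall>\<^sub>F n in sequentially. indicator (ball c (R - R / (real n + 2))) x = (indicator (ball c R) x :: real)"
proof (cases "x \<in> ball c R")
  case True
  obtain N :: nat where N: "R / (R - dist c x) < real N"
    using reals_Archimedean2 by blast
  have "x \<in> ball c (R - R / (real n + 2))" if "N \<le> n" for n
  proof -
    have "R / (R - dist c x) < real n + 2"
      using N that by linarith
    then show ?thesis
      using True assms by (simp add: field_simps)
  qed
  then have "indicator (ball c (R - R / (real n + 2))) x = (indicator (ball c R) x :: real)" if "N \<le> n" for n
    using True that by simp
  then show ?thesis
    unfolding eventually_sequentially by blast
next
  case False
  have "0 \<le> R / (real n + 2)" for n
    using assms by simp
  then have "x \<notin> ball c (R - R / (real n + 2))" for n
    using False by (smt (verit) mem_ball)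
  then show ?thesis
    using False by simp
qed

lemma set_integral_ball_le_of_smaller_balls:
  fixes g :: "real^'n \<Rightarrow> real"
  assumes cont: "continuous_on UNIV g" and "0 < R"
    and bound: "\<And>\<eta>. 0 < \<eta> \<Longrightarrow> \<eta> < R \<Longrightarrow> (LINT x : ball c (R - \<eta>) | lborel. g x) \<le> Y"
  shows "(LINT x : ball c R | lborel. g x) \<le> Y"
proof -
  define s where "s n = (\<lambda>x. indicator (ball c (R - R / (real n + 2))) x *\<^sub>R g x)" for n :: nat
  define f where "f = (\<lambda>x. indicator (ball c R) x *\<^sub>R g x)"
  have "(\<lambda>n. integral\<^sup>L lborel (s n)) \<longlonglongrightarrow> integral\<^sup>L lborel f"
  proof (rule integral_dominated_convergence[where w = "\<lambda>x. indicator (cball c R) x *\<^sub>R norm (g x)"])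
    show "f \<in> borel_measurable lborel"
      unfolding f_def measurable_lborel2
      by (rule borel_measurable_continuous_on_indicator) (auto intro: continuous_on_subset[OF cont])
    show "s n \<in> borel_measurable lborel" for n
      unfolding s_def measurable_lborel2
      by (rule borel_measurable_continuous_on_indicator) (auto intro: continuous_on_subset[OF cont])
    show "integrable lborel (\<lambda>x. indicator (cball c R) x *\<^sub>R norm (g x))"
      by (rule borel_integrable_compact[OF compact_cball])
        (intro continuous_intros continuous_on_subset[OF cont], simp)
    show "AE x in lborel. norm (s n x) \<le> indicator (cball c R) x *\<^sub>R norm (g x)" for n
    proof (rule AE_I2)
      fix x :: "real^'n"
      have "0 \<le> R / (real n + 2)"
        using \<open>0 < R\<close> by simp
      then have "ball c (R - R / (real n + 2)) \<subseteq> cball c R"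
        by auto
      then show "norm (s n x) \<le> indicator (cball c R) x *\<^sub>R norm (g x)"
        by (auto simp: s_def indicator_def)
    qed
    show "AE x in lborel. (\<lambda>n. s n x) \<longlonglongrightarrow> f x"
    proof (rule AE_I2)
      fix x :: "real^'n"
      have "\<forall>\<^sub>F n in sequentially. s n x = f x"
        using eventually_indicator_shrinking_ball[OF \<open>0 < R\<close>, of c x]
        by eventually_elim (simp add: s_def f_def)
      then show "(\<lambda>n. s n x) \<longlonglongrightarrow> f x"
        by (rule tendsto_eventually)
    qed
  qed
  moreover have "integral\<^sup>L lborel (s n) \<le> Y" for n
    using bound[of "R / (real n + 2)"] \<open>0 < R\<close>
    by (simp add: s_def set_lebesgue_integral_def divide_less_eq)
  ultimately show ?thesis
    unfolding set_lebesgue_integral_def f_def by (intro LIMSEQ_le_const2) auto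
qed

lemma AE_lborel_negligible_exception:
  assumes "AE s in lborel. P s"
  obtains E where "negligible E" "\<And>s. s \<notin> E \<Longrightarrow> P s"
proof -
  obtain N where "{s \<in> space lborel. \<not> P s} \<subseteq> N" "N \<in> null_sets lborel"
    using assms by (auto elim!: AE_E simp: null_sets_def)
  moreover have "negligible N"
    unfolding negligible_iff_null_sets by (rule null_sets_completionI[OF \<open>N \<in> null_sets lborel\<close>])
  ultimately show ?thesis
    using that by auto
qed

lemma norm_le_SUP_norm:
  assumes "bounded (f ` S)" "p \<in> S"
  shows "norm (f p) \<le> (SUP q \<in> S. norm (f q))"
proof (rule cSUP_upper[OF assms(2)])
  obtain B where "\<forall>y \<in> f ` S. norm y \<le> B"
    using assms(1) by (auto simp: bounded_iff)
  then show "bdd_above ((\<lambda>q. norm (f q)) ` S)"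
    by (auto intro!: bdd_aboveI[where M = B])
qed

section \<open>Transport by a one-sided Lipschitz field\<close>

locale transport_OSL =
  fixes T M :: real
    and a :: "real \<times> (real^'n) \<Rightarrow> real^'n"
    and Da :: "real \<times> (real^'n) \<Rightarrow> (real \<times> (real^'n)) \<Rightarrow>\<^sub>L (real^'n)"
    and u :: "real \<times> (real^'n) \<Rightarrow> real"
    and Du :: "real \<times> (real^'n) \<Rightarrow> (real \<times> (real^'n)) \<Rightarrow>\<^sub>L real"
    and D2u :: "real \<times> (real^'n) \<Rightarrow> (real \<times> (real^'n)) \<Rightarrow>\<^sub>L (real \<times> (real^'n)) \<Rightarrow>\<^sub>L real"
    and \<alpha> :: "real \<Rightarrow> real"
    and E :: "real set"
  assumes T_pos: "0 < T"
    and a_C1: "has_C1_derivative_on a Da ({0..T} \<times> UNIV)"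
    and a_bounded: "\<And>p. p \<in> {0..T} \<times> UNIV \<Longrightarrow> norm (a p) \<le> M"
    and u_C1: "has_C1_derivative_on u Du ({0..T} \<times> UNIV)"
    and Du_C1: "has_C1_derivative_on Du D2u ({0..T} \<times> UNIV)"
    and transport: "\<And>p. p \<in> {0..T} \<times> UNIV \<Longrightarrow> Du p (1, a p) = 0"
    and alpha_integrable: "\<alpha> integrable_on {0..T}"
    and negligible_E: "negligible E"
    and alpha_nonneg: "\<And>s. s \<in> {0..T} - E \<Longrightarrow> 0 \<le> \<alpha> s"
    and OSL: "\<And>s x y. s \<in> {0..T} - E \<Longrightarrow> inner (a (s, y) - a (s, x)) (y - x) \<le> \<alpha> s * (norm (y - x))\<^sup>2"
begin

abbreviation strip :: "(real \<times> (real^'n)) set" where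
  "strip \<equiv> {0..T} \<times> UNIV"

lemma a_has_derivative: "p \<in> strip \<Longrightarrow> (a has_derivative Da p) (at p within strip)"
  using a_C1 unfolding has_C1_derivative_on_def by blast

lemma Du_has_derivative: "p \<in> strip \<Longrightarrow> (Du has_derivative D2u p) (at p within strip)"
  using Du_C1 unfolding has_C1_derivative_on_def by blast

lemma continuous_on_Da: "continuous_on strip Da"
  using a_C1 by (simp add: has_C1_derivative_on_def)

lemma continuous_on_a: "continuous_on strip a"
  using a_has_derivative has_derivative_continuous continuous_on_eq_continuous_within by blast

lemma continuous_on_Du: "continuous_on strip Du"
  using u_C1 by (simp add: has_C1_derivative_on_def)

lemma continuous_on_D2u: "continuous_on strip D2u"
  using Du_C1 by (simp add: has_C1_derivative_on_def)

lemma has_derivative_slice: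
  assumes "\<And>p. p \<in> strip \<Longrightarrow> (f has_derivative f' p) (at p within strip)" and "s \<in> {0..T}"
  shows "((\<lambda>y. f (s, y)) has_derivative (\<lambda>v. f' (s, x) (0, v))) (at x)"
proof -
  have "((\<lambda>y. (s, y)) has_derivative (\<lambda>v. (0, v))) (at x within UNIV)"
    by (auto intro!: derivative_eq_intros)
  moreover have "(\<lambda>y. (s, y)) ` UNIV \<subseteq> strip"
    using \<open>s \<in> {0..T}\<close> by auto
  ultimately show ?thesis
    using has_derivative_in_compose2[OF assms(1), of "\<lambda>y. (s, y)" UNIV x] by simp
qed

lemma OSL_derivative:
  assumes "s \<in> {0..T} - E"
  shows "inner (Da (s, x) (0, v)) v \<le> \<alpha> s * (norm v)\<^sup>2"
proof -
  have "s \<in> {0..T}"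
    using assms by simp
  show ?thesis
    by (rule one_sided_lipschitz_derivative[OF has_derivative_slice[OF a_has_derivative \<open>s \<in> {0..T}\<close>] OSL[OF assms]])
qed

lemma D2u_symmetric: "p \<in> strip \<Longrightarrow> D2u p k h = D2u p h k"
  by (rule second_derivative_symmetric_strip[OF T_pos u_C1 Du_C1])

lemma transport_derivative_x:
  assumes "s \<in> {0..T}"
  shows "D2u (s, x) (0, y) (1, a (s, x)) + Du (s, x) (0, Da (s, x) (0, y)) = 0"
proof -
  have "((\<lambda>x'. (1::real, a (s, x'))) has_derivative (\<lambda>y. (0, Da (s, x) (0, y)))) (at x)"
    by (rule has_derivative_Pair[OF has_derivative_const has_derivative_slice[OF a_has_derivative assms]])
  from blinfun.FDERIV[OF has_derivative_slice[OF Du_has_derivative assms] this]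
  have "((\<lambda>x'. Du (s, x') (1, a (s, x'))) has_derivative
      (\<lambda>y. Du (s, x) (0, Da (s, x) (0, y)) + D2u (s, x) (0, y) (1, a (s, x)))) (at x)" .
  moreover have "((\<lambda>x'. Du (s, x') (1, a (s, x'))) has_derivative (\<lambda>y. 0)) (at x)"
  proof -
    have "(\<lambda>x'. Du (s, x') (1, a (s, x'))) = (\<lambda>x'. 0)"
      using transport assms by auto
    then show ?thesis
      by (simp only: has_derivative_const)
  qed
  ultimately have "(\<lambda>y. Du (s, x) (0, Da (s, x) (0, y)) + D2u (s, x) (0, y) (1, a (s, x))) = (\<lambda>y. 0)"
    by (rule has_derivative_unique)
  from fun_cong[OF this, of y] show ?thesis
    by (simp add: add.commute)
qed

definition grad_x :: "real \<times> (real^'n) \<Rightarrow> real^'n" where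
  "grad_x p = (\<Sum>k\<in>UNIV. Du p (0, axis k 1) *\<^sub>R axis k 1)"

definition grad_x' :: "real \<times> (real^'n) \<Rightarrow> real \<times> (real^'n) \<Rightarrow> real^'n" where
  "grad_x' p v = (\<Sum>k\<in>UNIV. D2u p v (0, axis k 1) *\<^sub>R axis k 1)"

lemma grad_x_nth: "grad_x p $ k = Du p (0, axis k 1)"
  by (simp add: grad_x_def sum_component axis_def if_distrib cong: if_cong)

lemma Du_eq_inner_grad_x: "Du p (0, y) = inner (grad_x p) y"
  unfolding grad_x_def by (rule linear_zero_pair_eq_inner) (rule bounded_linear.linear[OF blinfun.bounded_linear_right])

lemma grad_x_has_derivative:
  assumes "p \<in> strip"
  shows "(grad_x has_derivative grad_x' p) (at p within strip)"
proof -
  have "((\<lambda>p. Du p (0, axis k 1)) has_derivative (\<lambda>v. D2u p v (0, axis k 1))) (at p within strip)" for k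
    using blinfun.FDERIV[OF Du_has_derivative[OF assms] has_derivative_const] by simp
  then show ?thesis
    unfolding grad_x_def[abs_def] grad_x'_def[abs_def]
    by (intro has_derivative_sum has_derivative_scaleR_left)
qed

lemma continuous_on_grad_x: "continuous_on strip grad_x"
  unfolding grad_x_def[abs_def] by (intro continuous_intros continuous_on_Du)

lemma continuous_on_grad_x': "continuous_on strip (\<lambda>p. grad_x' p v)"
  unfolding grad_x'_def by (intro continuous_intros continuous_on_D2u)

text \<open>The gradient is transported by the adjoint of \<open>-D\<^sub>x a\<close>:
  \<open>(\<partial>\<^sub>t + a \<cdot> \<nabla>) \<nabla>u = -(D\<^sub>x a)\<^sup>T \<nabla>u\<close>, tested against \<open>\<nabla>u\<close>.\<close>

lemma grad_x_transport:
  assumes "p \<in> strip"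
  shows "inner (grad_x p) (grad_x' p (1, a p)) = - inner (Da p (0, grad_x p)) (grad_x p)"
proof -
  obtain s x where p: "p = (s, x)" and "s \<in> {0..T}"
    using assms by auto
  have "inner (grad_x p) (grad_x' p (1, a p)) = D2u p (1, a p) (0, grad_x p)"
    using linear_zero_pair_eq_inner[OF bounded_linear.linear[OF blinfun.bounded_linear_right[of "D2u p (1, a p)"]], of "grad_x p"]
    by (simp add: grad_x'_def inner_commute)
  also have "\<dots> = D2u p (0, grad_x p) (1, a p)"
    by (rule D2u_symmetric[OF assms])
  also have "\<dots> = - Du p (0, Da p (0, grad_x p))"
    using transport_derivative_x[OF \<open>s \<in> {0..T}\<close>] p by (simp add: eq_neg_iff_add_eq_0)
  also have "\<dots> = - inner (Da p (0, grad_x p)) (grad_x p)"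
    by (simp add: Du_eq_inner_grad_x inner_commute)
  finally show ?thesis .
qed

lemma continuous_on_slice:
  assumes "continuous_on strip f" "s \<in> {0..T}"
  shows "continuous_on X (\<lambda>x. f (s, x))"
  using assms by (intro continuous_on_compose2[OF assms(1)] continuous_intros) auto

lemma M_nonneg: "0 \<le> M"
proof -
  have "norm (a (0, 0)) \<le> M"
    using T_pos by (intro a_bounded) simp
  then show ?thesis
    using norm_ge_zero order_trans by blast
qed

lemma integral_alpha_nonneg: "s \<le> T \<Longrightarrow> 0 \<le> integral {0..s} \<alpha>"
  using alpha_integrable alpha_nonneg
  by (intro integral_nonneg_off_negligible[OF negligible_E]) (auto intro: integrable_on_subinterval)

definition smooth_norm :: "real \<Rightarrow> real \<times> (real^'n) \<Rightarrow> real" where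
  "smooth_norm \<epsilon> p = sqrt (inner (grad_x p) (grad_x p) + \<epsilon>\<^sup>2)"

definition smooth_norm' :: "real \<Rightarrow> real \<times> (real^'n) \<Rightarrow> real \<times> (real^'n) \<Rightarrow> real" where
  "smooth_norm' \<epsilon> p v = inner (grad_x p) (grad_x' p v) / smooth_norm \<epsilon> p"

lemma smooth_norm_ge: "\<epsilon> \<le> smooth_norm \<epsilon> p" "norm (grad_x p) \<le> smooth_norm \<epsilon> p"
  unfolding smooth_norm_def by (auto intro!: real_le_rsqrt simp: power2_norm_eq_inner)

lemma smooth_norm_pos: "0 < \<epsilon> \<Longrightarrow> 0 < smooth_norm \<epsilon> p"
  using smooth_norm_ge(1)[of \<epsilon> p] by linarith

lemma smooth_norm_le: "0 \<le> \<epsilon> \<Longrightarrow> smooth_norm \<epsilon> p \<le> norm (grad_x p) + \<epsilon>"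
  unfolding smooth_norm_def
  by (rule real_le_lsqrt) (auto simp: power2_eq_square algebra_simps power2_norm_eq_inner[symmetric])

lemma smooth_norm_has_derivative:
  assumes "0 < \<epsilon>" "p \<in> strip"
  shows "(smooth_norm \<epsilon> has_derivative smooth_norm' \<epsilon> p) (at p within strip)"
proof -
  have "0 < inner (grad_x p) (grad_x p) + \<epsilon>\<^sup>2"
    using assms by (simp add: add_nonneg_pos)
  moreover have "((\<lambda>p. inner (grad_x p) (grad_x p) + \<epsilon>\<^sup>2) has_derivative
      (\<lambda>v. inner (grad_x p) (grad_x' p v) + inner (grad_x' p v) (grad_x p))) (at p within strip)"
    by (auto intro!: derivative_eq_intros grad_x_has_derivative[OF assms(2)])
  ultimately have "((\<lambda>p. sqrt (inner (grad_x p) (grad_x p) + \<epsilon>\<^sup>2)) has_derivative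
      (\<lambda>v. (inner (grad_x p) (grad_x' p v) + inner (grad_x' p v) (grad_x p)) *
        (inverse (sqrt (inner (grad_x p) (grad_x p) + \<epsilon>\<^sup>2)) / 2))) (at p within strip)"
    by (rule DERIV_compose_FDERIV[OF DERIV_real_sqrt])
  then show ?thesis
    unfolding smooth_norm_def[abs_def] smooth_norm'_def[abs_def]
    by (rule has_derivative_eq_rhs) (simp add: fun_eq_iff inner_commute field_simps)
qed

lemma continuous_on_smooth_norm: "continuous_on strip (smooth_norm \<epsilon>)"
  unfolding smooth_norm_def[abs_def] by (intro continuous_intros continuous_on_grad_x)

lemma continuous_on_smooth_norm':
  assumes "0 < \<epsilon>"
  shows "continuous_on strip (\<lambda>p. smooth_norm' \<epsilon> p v)"
  unfolding smooth_norm'_def using smooth_norm_pos[OF assms]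
  by (intro continuous_intros continuous_on_grad_x continuous_on_grad_x' continuous_on_smooth_norm)
    (metis less_irrefl)

text \<open>By \<open>grad_x_transport\<close> the left-hand side is \<open>F tr A - \<langle>A \<nabla>u, \<nabla>u\<rangle> / F\<close>, where
  \<open>F = smooth_norm \<epsilon>\<close> and \<open>A = D\<^sub>x a\<close>.\<close>

lemma smooth_norm_transport_le:
  assumes s: "s \<in> {0..T} - E" and "0 < \<epsilon>"
  shows "smooth_norm' \<epsilon> (s, x) (1, a (s, x)) + smooth_norm \<epsilon> (s, x) * (\<Sum>i\<in>UNIV. Da (s, x) (0, axis i 1) $ i)
    \<le> \<alpha> s * ((real CARD('n) - 1) * smooth_norm \<epsilon> (s, x) + \<epsilon>)"
proof -
  define p where "p = (s, x)"
  define A where "A v = Da p (0, v)" for v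
  define W where "W = grad_x p"
  define tr where "tr = (\<Sum>i\<in>UNIV. inner (A (axis i 1)) (axis i 1))"
  have "linear A"
    unfolding A_def by (intro linearI) (simp_all add: blinfun.add_right[symmetric] blinfun.scaleR_right[symmetric])
  have bound: "inner (A v) v \<le> \<alpha> s * (norm v)\<^sup>2" for v
    unfolding A_def p_def by (rule OSL_derivative[OF s])
  have "tr * (norm W)\<^sup>2 - inner (A W) W \<le> (real CARD('n) - 1) * \<alpha> s * (norm W)\<^sup>2"
    unfolding tr_def by (rule trace_form_bound[OF \<open>linear A\<close> bound])
  moreover have "tr \<le> real CARD('n) * \<alpha> s"
    unfolding tr_def using bound[of "axis _ 1"] sum_bounded_above[of UNIV "\<lambda>i. inner (A (axis i 1)) (axis i 1)" "\<alpha> s"]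
    by simp
  ultimately have "smooth_norm \<epsilon> p * tr - inner (A W) W / smooth_norm \<epsilon> p
      \<le> (real CARD('n) - 1) * \<alpha> s * smooth_norm \<epsilon> p + \<alpha> s * \<epsilon>"
    using smoothed_trace_inequality[of "(norm W)\<^sup>2" \<epsilon> "\<alpha> s" tr "inner (A W) W"] alpha_nonneg[OF s] \<open>0 < \<epsilon>\<close>
    by (simp add: smooth_norm_def W_def power2_norm_eq_inner)
  moreover have "smooth_norm' \<epsilon> p (1, a p) = - inner (A W) W / smooth_norm \<epsilon> p"
    using grad_x_transport[of p] s by (simp add: smooth_norm'_def A_def W_def p_def)
  moreover have "(\<Sum>i\<in>UNIV. Da p (0, axis i 1) $ i) = tr"
    by (simp add: tr_def A_def inner_axis)
  ultimately show ?thesis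
    by (simp add: p_def algebra_simps)
qed

end

section \<open>Localization to a backward cone\<close>

locale transport_OSL_cone = transport_OSL T M a Da u Du D2u \<alpha> E
  for T M :: real and a :: "real \<times> (real^'n) \<Rightarrow> real^'n" and Da u Du D2u \<alpha> E +
  fixes t R \<eta> :: real and x0 :: "real^'n"
  assumes t_range: "0 \<le> t" "t \<le> T" and eta_range: "0 < \<eta>" "\<eta> < R"
begin

definition cone_radius :: "real \<Rightarrow> real" where
  "cone_radius s = R + (t - s) * M"

definition cutoff_width :: real where
  "cutoff_width = (R\<^sup>2 - (R - \<eta>)\<^sup>2) / 2"

text \<open>The margin \<open>1\<close> around the cone is the one required by \<open>integral_partial_derivative_eq_0\<close>.\<close>

definition cube :: "(real^'n) set" where
  "cube = cbox (x0 - (\<chi> j. R + t * M + 1)) (x0 + (\<chi> j. R + t * M + 1))"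

definition cutoff :: "real \<times> (real^'n) \<Rightarrow> real" where
  "cutoff p = ramp cutoff_width ((cone_radius (fst p))\<^sup>2 - inner (snd p - x0) (snd p - x0))"

definition cutoff' :: "real \<times> (real^'n) \<Rightarrow> real \<times> (real^'n) \<Rightarrow> real" where
  "cutoff' p v = ramp' cutoff_width ((cone_radius (fst p))\<^sup>2 - inner (snd p - x0) (snd p - x0)) *
     (- 2 * M * cone_radius (fst p) * fst v - 2 * inner (snd p - x0) (snd v))"

lemma cutoff_width_pos: "0 < cutoff_width"
  using eta_range by (simp add: cutoff_width_def power2_eq_square algebra_simps)

lemma cone_radius_bounds: "s \<le> t \<Longrightarrow> R \<le> cone_radius s" "0 \<le> s \<Longrightarrow> cone_radius s \<le> R + t * M"
  using M_nonneg by (auto simp: cone_radius_def mult_right_mono)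

lemma cutoff_bounds: "0 \<le> cutoff p \<and> cutoff p \<le> 1"
  unfolding cutoff_def by (rule ramp_bounds[OF cutoff_width_pos])

lemma cutoff_eq_0:
  assumes "s \<in> {0..t}" "R + t * M \<le> norm (x - x0)"
  shows "cutoff (s, x) = 0"
proof -
  have "(cone_radius s)\<^sup>2 \<le> (norm (x - x0))\<^sup>2"
    using assms cone_radius_bounds[of s] eta_range by (intro power_mono) auto
  then show ?thesis
    by (simp add: cutoff_def ramp_eq_0 cutoff_width_pos power2_norm_eq_inner)
qed

lemma cutoff_eq_1:
  assumes "x \<in> ball x0 (R - \<eta>)"
  shows "cutoff (t, x) = 1"
proof -
  have "(norm (x - x0))\<^sup>2 < (R - \<eta>)\<^sup>2"
    using assms by (intro power_strict_mono) (auto simp: dist_norm norm_minus_commute)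
  then have "2 * cutoff_width \<le> (cone_radius t)\<^sup>2 - inner (x - x0) (x - x0)"
    by (simp add: cutoff_width_def cone_radius_def power2_norm_eq_inner)
  then show ?thesis
    by (simp add: cutoff_def ramp_eq_1 cutoff_width_pos)
qed

text \<open>The cone shrinks at speed \<open>M \<ge> \<parallel>a\<parallel>\<close>, so the cutoff does not increase along characteristics.\<close>

lemma cutoff'_transport_nonpos:
  assumes "s \<in> {0..t}"
  shows "cutoff' (s, x) (1, a (s, x)) \<le> 0"
proof (cases "ramp' cutoff_width ((cone_radius s)\<^sup>2 - inner (x - x0) (x - x0)) = 0")
  case False
  then have "\<not> (cone_radius s)\<^sup>2 - inner (x - x0) (x - x0) \<le> 0"
    using ramp'_eq_0[OF cutoff_width_pos] by blast
  then have "inner (x - x0) (x - x0) < (cone_radius s)\<^sup>2"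
    by simp
  then have "(norm (x - x0))\<^sup>2 < (cone_radius s)\<^sup>2"
    by (simp add: power2_norm_eq_inner)
  moreover have "0 \<le> cone_radius s"
    using cone_radius_bounds(1)[of s] assms eta_range by simp
  ultimately have "norm (x - x0) < cone_radius s"
    by (rule power2_less_imp_less)
  moreover have "norm (a (s, x)) \<le> M"
    using assms t_range by (intro a_bounded) simp
  ultimately have "norm (x - x0) * norm (a (s, x)) \<le> cone_radius s * M"
    using \<open>0 \<le> cone_radius s\<close> by (intro mult_mono) auto
  then have "\<bar>inner (x - x0) (a (s, x))\<bar> \<le> cone_radius s * M"
    using Cauchy_Schwarz_ineq2[of "x - x0" "a (s, x)"] by linarith
  then have "0 \<le> cone_radius s * M + inner (x - x0) (a (s, x))"
    by (simp add: abs_le_iff)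
  moreover have "cutoff' (s, x) (1, a (s, x)) = - 2 * (ramp' cutoff_width ((cone_radius s)\<^sup>2 - inner (x - x0) (x - x0))
      * (cone_radius s * M + inner (x - x0) (a (s, x))))"
    by (simp add: cutoff'_def algebra_simps)
  ultimately show ?thesis
    using ramp'_nonneg[OF cutoff_width_pos] by simp
qed (simp add: cutoff'_def)

lemma cutoff_has_derivative: "(cutoff has_derivative cutoff' p) (at p within X)"
proof -
  have "((\<lambda>p. (cone_radius (fst p))\<^sup>2 - inner (snd p - x0) (snd p - x0)) has_derivative
      (\<lambda>v. - 2 * M * cone_radius (fst p) * fst v - 2 * inner (snd p - x0) (snd v))) (at p within X)"
    unfolding cone_radius_def
    by (rule has_derivative_eq_rhs)
      (auto intro!: derivative_eq_intros simp: fun_eq_iff inner_commute algebra_simps power2_eq_square)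
  from DERIV_compose_FDERIV[OF ramp_has_real_derivative[OF cutoff_width_pos] this]
  show ?thesis
    unfolding cutoff_def[abs_def] cutoff'_def[abs_def] by (simp only: mult.commute)
qed

lemma continuous_on_cutoff: "continuous_on X cutoff"
  unfolding cutoff_def[abs_def] cone_radius_def
  by (intro continuous_on_compose2[OF continuous_on_ramp[OF cutoff_width_pos, of UNIV]] continuous_intros) auto

lemma continuous_on_cutoff': "continuous_on X (\<lambda>p. cutoff' p v)"
  unfolding cutoff'_def cone_radius_def
  by (intro continuous_on_compose2[OF continuous_on_ramp'[OF cutoff_width_pos, of UNIV]] continuous_intros) auto

lemma integrable_on_slice:
  fixes f :: "real \<times> (real^'n) \<Rightarrow> real"
  assumes "continuous_on strip f" "s \<in> {0..T}"
  shows "(\<lambda>x. f (s, x)) integrable_on cube"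
  unfolding cube_def by (rule integrable_continuous) (rule continuous_on_slice[OF assms])

definition localized_norm :: "real \<Rightarrow> real \<times> (real^'n) \<Rightarrow> real" where
  "localized_norm \<epsilon> p = cutoff p * smooth_norm \<epsilon> p"

definition localized_norm' :: "real \<Rightarrow> real \<times> (real^'n) \<Rightarrow> real \<times> (real^'n) \<Rightarrow> real" where
  "localized_norm' \<epsilon> p v = cutoff' p v * smooth_norm \<epsilon> p + cutoff p * smooth_norm' \<epsilon> p v"

text \<open>The \<open>i\<close>-th partial derivative of \<open>localized_norm \<epsilon> \<cdot> a\<^sub>i\<close> in space; these add up to the divergence.\<close>

definition flux' :: "real \<Rightarrow> real \<Rightarrow> 'n \<Rightarrow> real^'n \<Rightarrow> real" where
  "flux' \<epsilon> s i x = localized_norm' \<epsilon> (s, x) (0, axis i 1) * a (s, x) $ i + localized_norm \<epsilon> (s, x) * Da (s, x) (0, axis i 1) $ i"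

definition energy :: "real \<Rightarrow> real \<Rightarrow> real" where
  "energy \<epsilon> s = integral cube (\<lambda>x. localized_norm \<epsilon> (s, x))"

definition energy' :: "real \<Rightarrow> real \<Rightarrow> real" where
  "energy' \<epsilon> s = integral cube (\<lambda>x. localized_norm' \<epsilon> (s, x) (1, 0))"

lemma localized_norm_nonneg: "0 \<le> localized_norm \<epsilon> p"
  using cutoff_bounds[of p] by (simp add: localized_norm_def smooth_norm_def)

lemma localized_norm_has_derivative:
  assumes "0 < \<epsilon>" "p \<in> strip"
  shows "(localized_norm \<epsilon> has_derivative localized_norm' \<epsilon> p) (at p within strip)"
  unfolding localized_norm_def[abs_def] localized_norm'_def[abs_def]
  by (rule has_derivative_eq_rhs)
    (auto intro!: derivative_eq_intros cutoff_has_derivative smooth_norm_has_derivative[OF assms]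
      simp: fun_eq_iff algebra_simps)

lemma continuous_on_localized_norm: "continuous_on strip (localized_norm \<epsilon>)"
  unfolding localized_norm_def[abs_def] by (intro continuous_intros continuous_on_cutoff continuous_on_smooth_norm)

lemma continuous_on_localized_norm': "0 < \<epsilon> \<Longrightarrow> continuous_on strip (\<lambda>p. localized_norm' \<epsilon> p v)"
  unfolding localized_norm'_def
  by (intro continuous_intros continuous_on_cutoff continuous_on_cutoff' continuous_on_smooth_norm
      continuous_on_smooth_norm')

lemma localized_norm_transport_le:
  assumes s: "s \<in> {0..t} - E" and "0 < \<epsilon>"
  shows "localized_norm' \<epsilon> (s, x) (1, 0) + (\<Sum>i\<in>UNIV. flux' \<epsilon> s i x)
    \<le> \<alpha> s * ((real CARD('n) - 1) * localized_norm \<epsilon> (s, x) + \<epsilon>)"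
proof -
  define p where "p = (s, x)"
  define N where "N = real CARD('n)"
  have "s \<in> {0..T} - E" "p \<in> strip"
    using s t_range by (auto simp: p_def)
  have lin: "linear (localized_norm' \<epsilon> p)"
    by (rule has_derivative_linear[OF localized_norm_has_derivative[OF \<open>0 < \<epsilon>\<close> \<open>p \<in> strip\<close>]])
  have "localized_norm' \<epsilon> p (1, 0) + (\<Sum>i\<in>UNIV. flux' \<epsilon> s i x)
      = localized_norm' \<epsilon> p (1, 0) + localized_norm' \<epsilon> p (0, a p) + localized_norm \<epsilon> p * (\<Sum>i\<in>UNIV. Da p (0, axis i 1) $ i)"
    using linear_zero_pair_eq_inner[OF lin, of "a p"]
    by (simp add: flux'_def p_def sum.distrib sum_distrib_left inner_sum_left inner_axis')
  also have "\<dots> = cutoff' p (1, a p) * smooth_norm \<epsilon> p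
      + cutoff p * (smooth_norm' \<epsilon> p (1, a p) + smooth_norm \<epsilon> p * (\<Sum>i\<in>UNIV. Da p (0, axis i 1) $ i))"
    using linear_add[OF lin, of "(1, 0)" "(0, a p)"] by (simp add: localized_norm'_def localized_norm_def algebra_simps)
  also have "\<dots> \<le> 0 + cutoff p * (\<alpha> s * ((N - 1) * smooth_norm \<epsilon> p + \<epsilon>))"
  proof (rule add_mono)
    show "cutoff' p (1, a p) * smooth_norm \<epsilon> p \<le> 0"
      using cutoff'_transport_nonpos[of s x] s smooth_norm_pos[OF \<open>0 < \<epsilon>\<close>, of p]
      by (simp add: p_def mult_nonpos_nonneg)
    show "cutoff p * (smooth_norm' \<epsilon> p (1, a p) + smooth_norm \<epsilon> p * (\<Sum>i\<in>UNIV. Da p (0, axis i 1) $ i))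
        \<le> cutoff p * (\<alpha> s * ((N - 1) * smooth_norm \<epsilon> p + \<epsilon>))"
      using smooth_norm_transport_le[OF \<open>s \<in> {0..T} - E\<close> \<open>0 < \<epsilon>\<close>] cutoff_bounds[of p]
      by (intro mult_left_mono) (auto simp: p_def N_def)
  qed
  also have "\<dots> = \<alpha> s * ((N - 1) * localized_norm \<epsilon> p + cutoff p * \<epsilon>)"
    by (simp add: localized_norm_def algebra_simps)
  also have "\<dots> \<le> \<alpha> s * ((N - 1) * localized_norm \<epsilon> p + \<epsilon>)"
    using cutoff_bounds[of p] alpha_nonneg[OF \<open>s \<in> {0..T} - E\<close>] \<open>0 < \<epsilon>\<close>
    by (intro mult_left_mono add_left_mono) (auto simp: mult_left_le_one_le)
  finally show ?thesis
    by (simp add: p_def N_def)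
qed

lemma integral_flux'_eq_0:
  assumes "s \<in> {0..t}" "0 < \<epsilon>"
  shows "integral cube (flux' \<epsilon> s i) = 0"
proof -
  have "s \<in> {0..T}"
    using assms t_range by auto
  have "integral cube (\<lambda>x. (\<lambda>x y. localized_norm \<epsilon> (s, x) * Da (s, x) (0, y) $ i
      + localized_norm' \<epsilon> (s, x) (0, y) * a (s, x) $ i) x (axis i 1)) = 0"
    unfolding cube_def
  proof (rule integral_partial_derivative_eq_0)
    fix x
    have "((\<lambda>x. a (s, x) $ i) has_derivative (\<lambda>y. Da (s, x) (0, y) $ i)) (at x)"
      using has_derivative_slice[OF a_has_derivative \<open>s \<in> {0..T}\<close>]
      by (rule bounded_linear.has_derivative[OF bounded_linear_vec_nth])
    with has_derivative_slice[OF localized_norm_has_derivative[OF \<open>0 < \<epsilon>\<close>] \<open>s \<in> {0..T}\<close>]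
    show "((\<lambda>x. localized_norm \<epsilon> (s, x) * a (s, x) $ i) has_derivative
        (\<lambda>y. localized_norm \<epsilon> (s, x) * Da (s, x) (0, y) $ i + localized_norm' \<epsilon> (s, x) (0, y) * a (s, x) $ i)) (at x)"
      by (rule has_derivative_mult)
  next
    show "continuous_on UNIV (\<lambda>x. localized_norm \<epsilon> (s, x) * Da (s, x) (0, axis i 1) $ i
        + localized_norm' \<epsilon> (s, x) (0, axis i 1) * a (s, x) $ i)"
      using \<open>s \<in> {0..T}\<close> \<open>0 < \<epsilon>\<close>
      by (intro continuous_intros continuous_on_slice continuous_on_localized_norm' continuous_on_localized_norm
          continuous_on_a continuous_on_Da)
  next
    fix x
    assume "R + t * M \<le> norm (x - x0)"
    then show "localized_norm \<epsilon> (s, x) * a (s, x) $ i = 0"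
      using cutoff_eq_0[OF assms(1)] by (simp add: localized_norm_def)
  qed
  then show ?thesis
    by (simp add: flux'_def[abs_def] add.commute)
qed

lemma localized_norm_has_real_derivative_time:
  assumes "s \<in> {0..t}" "0 < \<epsilon>"
  shows "((\<lambda>s. localized_norm \<epsilon> (s, x)) has_real_derivative localized_norm' \<epsilon> (s, x) (1, 0)) (at s within {0..t})"
proof -
  have img: "(\<lambda>s. (s, x)) ` {0..t} \<subseteq> strip"
    using t_range by auto
  have "((\<lambda>s. (s, x)) has_derivative (\<lambda>h. (h, 0))) (at s within {0..t})"
    by (auto intro!: derivative_eq_intros)
  from has_derivative_in_compose2[OF localized_norm_has_derivative[OF assms(2)] img assms(1) this]
  have deriv: "((\<lambda>s. localized_norm \<epsilon> (s, x)) has_derivative (\<lambda>h. localized_norm' \<epsilon> (s, x) (h, 0)))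
      (at s within {0..t})"
    by simp
  have "(\<lambda>h. localized_norm' \<epsilon> (s, x) (h, 0)) = (*) (localized_norm' \<epsilon> (s, x) (1, 0))"
  proof
    fix h :: real
    show "localized_norm' \<epsilon> (s, x) (h, 0) = localized_norm' \<epsilon> (s, x) (1, 0) * h"
      using linear_scale[OF has_derivative_linear[OF deriv], of h 1] by (simp add: mult.commute)
  qed
  with deriv show ?thesis
    unfolding has_field_derivative_def by simp
qed

lemma energy_has_derivative:
  assumes "s \<in> {0..t}" "0 < \<epsilon>"
  shows "(energy \<epsilon> has_real_derivative energy' \<epsilon> s) (at s within {0..t})"
  unfolding energy_def[abs_def] energy'_def cube_def
proof (rule leibniz_rule_field_derivative[where f = "\<lambda>s x. localized_norm \<epsilon> (s, x)"
      and fx = "\<lambda>s x. localized_norm' \<epsilon> (s, x) (1, 0)"])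
  show "((\<lambda>s. localized_norm \<epsilon> (s, x)) has_field_derivative localized_norm' \<epsilon> (s, x) (1, 0)) (at s within {0..t})"
    if "s \<in> {0..t}" for s x
    by (rule localized_norm_has_real_derivative_time[OF that assms(2)])
  show "(\<lambda>x. localized_norm \<epsilon> (s, x)) integrable_on cbox (x0 - (\<chi> j. R + t * M + 1)) (x0 + (\<chi> j. R + t * M + 1))"
    if "s \<in> {0..t}" for s
    using integrable_on_slice[OF continuous_on_localized_norm] that t_range by (simp add: cube_def)
  have "continuous_on ({0..t} \<times> cbox (x0 - (\<chi> j. R + t * M + 1)) (x0 + (\<chi> j. R + t * M + 1)))
      (\<lambda>p. localized_norm' \<epsilon> p (1, 0))"
    using t_range by (intro continuous_on_subset[OF continuous_on_localized_norm'[OF assms(2)]]) auto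
  then show "continuous_on ({0..t} \<times> cbox (x0 - (\<chi> j. R + t * M + 1)) (x0 + (\<chi> j. R + t * M + 1)))
      (\<lambda>(s, x). localized_norm' \<epsilon> (s, x) (1, 0))"
    by (simp add: case_prod_eta)
qed (use assms in auto)

lemma energy'_le:
  assumes s: "s \<in> {0..t} - E" and "0 < \<epsilon>"
  shows "energy' \<epsilon> s \<le> \<alpha> s * ((real CARD('n) - 1) * energy \<epsilon> s + \<epsilon> * measure lborel cube)"
proof -
  have "s \<in> {0..T}"
    using s t_range by auto
  have integrable: "(\<lambda>x. localized_norm' \<epsilon> (s, x) (1, 0)) integrable_on cube"
    "(\<lambda>x. localized_norm \<epsilon> (s, x)) integrable_on cube"
    "flux' \<epsilon> s i integrable_on cube" for i
    unfolding flux'_def using \<open>s \<in> {0..T}\<close> \<open>0 < \<epsilon>\<close>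
    by (intro integrable_on_slice continuous_on_localized_norm' continuous_on_localized_norm
        continuous_intros continuous_on_a continuous_on_Da; simp)+
  have "energy' \<epsilon> s = integral cube (\<lambda>x. localized_norm' \<epsilon> (s, x) (1, 0) + (\<Sum>i\<in>UNIV. flux' \<epsilon> s i x))"
    using integral_flux'_eq_0[of s \<epsilon>] s \<open>0 < \<epsilon>\<close> integrable
    by (simp add: energy'_def integral_add integral_sum integrable_sum)
  also have "\<dots> \<le> integral cube (\<lambda>x. \<alpha> s * ((real CARD('n) - 1) * localized_norm \<epsilon> (s, x) + \<epsilon>))"
  proof (rule integral_le)
    show "(\<lambda>x. \<alpha> s * ((real CARD('n) - 1) * localized_norm \<epsilon> (s, x) + \<epsilon>)) integrable_on cube"
      using \<open>s \<in> {0..T}\<close> by (intro integrable_on_slice continuous_intros continuous_on_localized_norm)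
    show "(\<lambda>x. localized_norm' \<epsilon> (s, x) (1, 0) + (\<Sum>i\<in>UNIV. flux' \<epsilon> s i x)) integrable_on cube"
      using integrable by (intro integrable_add integrable_sum) auto
  qed (rule localized_norm_transport_le[OF s \<open>0 < \<epsilon>\<close>])
  also have "\<dots> = \<alpha> s * integral cube (\<lambda>x. (real CARD('n) - 1) * localized_norm \<epsilon> (s, x) + \<epsilon>)"
    by (rule integral_mult_right)
  also have "integral cube (\<lambda>x. (real CARD('n) - 1) * localized_norm \<epsilon> (s, x) + \<epsilon>)
      = integral cube (\<lambda>x. (real CARD('n) - 1) * localized_norm \<epsilon> (s, x)) + integral cube (\<lambda>x. \<epsilon>)"
    using integrable_on_cmult_left[OF integrable(2), of "real CARD('n) - 1"]
    by (intro integral_add) (auto simp: cube_def)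
  also have "integral cube (\<lambda>x. (real CARD('n) - 1) * localized_norm \<epsilon> (s, x)) = (real CARD('n) - 1) * energy \<epsilon> s"
    unfolding energy_def by (rule integral_mult_right)
  also have "integral cube (\<lambda>x. \<epsilon>) = \<epsilon> * measure lborel cube"
    by (simp add: cube_def)
  finally show ?thesis .
qed

lemma energy_gronwall:
  assumes "0 < \<epsilon>"
  shows "energy \<epsilon> t \<le> exp ((real CARD('n) - 1) * integral {0..t} \<alpha>) *
    (energy \<epsilon> 0 + \<epsilon> * measure lborel cube * integral {0..t} \<alpha>)"
proof (rule gronwall_derivative_ae[OF t_range(1) negligible_E])
  show "(energy \<epsilon> has_real_derivative energy' \<epsilon> s) (at s within {0..t})" if "s \<in> {0..t}" for s
    by (rule energy_has_derivative[OF that assms])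
  show "\<alpha> integrable_on {0..t}"
    using integrable_on_subinterval[OF alpha_integrable] t_range by auto
  show "0 \<le> energy \<epsilon> 0"
    unfolding energy_def using T_pos
    by (intro integral_nonneg integrable_on_slice continuous_on_localized_norm localized_norm_nonneg) auto
  show "0 \<le> \<alpha> s" "energy' \<epsilon> s \<le> \<alpha> s * ((real CARD('n) - 1) * energy \<epsilon> s + \<epsilon> * measure lborel cube)"
    if "s \<in> {0..t} - E" for s
    using that t_range alpha_nonneg energy'_le[OF that assms] by auto
qed (use assms in auto)

lemma ball_subset_cube: "r \<le> R + t * M + 1 \<Longrightarrow> ball x0 r \<subseteq> cube"
  using cball_subset_cbox_cart[of x0 "R + t * M + 1"] unfolding cube_def by fastforce

lemma integral_ball_le_energy:
  assumes "0 < \<epsilon>"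
  shows "integral (ball x0 (R - \<eta>)) (\<lambda>x. norm (grad_x (t, x))) \<le> energy \<epsilon> t"
proof -
  have "0 \<le> t * M"
    using M_nonneg t_range by simp
  then have sub: "ball x0 (R - \<eta>) \<subseteq> cube"
    using eta_range by (intro ball_subset_cube) simp
  have "integral (ball x0 (R - \<eta>)) (\<lambda>x. norm (grad_x (t, x)))
      = integral cube (\<lambda>x. if x \<in> ball x0 (R - \<eta>) then norm (grad_x (t, x)) else 0)"
    by (simp only: integral_restrict_Int Int_absorb2[OF sub])
  also have "\<dots> \<le> energy \<epsilon> t"
    unfolding energy_def
  proof (rule integral_le)
    show "(\<lambda>x. if x \<in> ball x0 (R - \<eta>) then norm (grad_x (t, x)) else 0) integrable_on cube"
      unfolding integrable_restrict_Int using sub t_range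
      by (simp add: Int_absorb2 integrable_on_ball continuous_on_slice continuous_on_norm continuous_on_grad_x)
    show "(\<lambda>x. localized_norm \<epsilon> (t, x)) integrable_on cube"
      using t_range by (intro integrable_on_slice continuous_on_localized_norm) auto
    show "(if x \<in> ball x0 (R - \<eta>) then norm (grad_x (t, x)) else 0) \<le> localized_norm \<epsilon> (t, x)" for x
      using cutoff_eq_1[of x] smooth_norm_ge(2)[of "(t, x)" \<epsilon>] localized_norm_nonneg[of \<epsilon> "(t, x)"]
      by (auto simp: localized_norm_def)
  qed
  finally show ?thesis .
qed

lemma energy_0_le:
  assumes "0 < \<epsilon>"
  shows "energy \<epsilon> 0 \<le> integral (ball x0 (R + t * M)) (\<lambda>x. norm (grad_x (0, x))) + \<epsilon> * measure lborel cube"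
proof -
  define g where "g x = (if x \<in> ball x0 (R + t * M) then norm (grad_x (0, x)) else 0)" for x
  have sub: "ball x0 (R + t * M) \<subseteq> cube"
    by (rule ball_subset_cube) simp
  have g: "g integrable_on cube"
    unfolding g_def integrable_restrict_Int using sub T_pos
    by (simp add: Int_absorb2 integrable_on_ball continuous_on_slice continuous_on_norm continuous_on_grad_x)
  have "energy \<epsilon> 0 \<le> integral cube (\<lambda>x. g x + \<epsilon>)"
    unfolding energy_def
  proof (rule integral_le)
    show "(\<lambda>x. localized_norm \<epsilon> (0, x)) integrable_on cube"
      using T_pos by (intro integrable_on_slice continuous_on_localized_norm) auto
    show "(\<lambda>x. g x + \<epsilon>) integrable_on cube"
      using g by (intro integrable_add) (auto simp: cube_def)
    show "localized_norm \<epsilon> (0, x) \<le> g x + \<epsilon>" for x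
    proof (cases "x \<in> ball x0 (R + t * M)")
      case True
      have "localized_norm \<epsilon> (0, x) \<le> smooth_norm \<epsilon> (0, x)"
        using cutoff_bounds[of "(0, x)"] smooth_norm_pos[OF assms, of "(0, x)"]
        by (simp add: localized_norm_def mult_left_le_one_le)
      also have "\<dots> \<le> norm (grad_x (0, x)) + \<epsilon>"
        using assms by (intro smooth_norm_le) simp
      finally show ?thesis
        using True by (simp add: g_def)
    next
      case False
      then show ?thesis
        using cutoff_eq_0[of 0 x] t_range assms
        by (simp add: g_def localized_norm_def dist_norm norm_minus_commute)
    qed
  qed
  also have "\<dots> = integral cube g + integral cube (\<lambda>x. \<epsilon>)"
    using g by (intro integral_add) (auto simp: cube_def)
  also have "integral cube g = integral (ball x0 (R + t * M)) (\<lambda>x. norm (grad_x (0, x)))"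
    unfolding g_def integral_restrict_Int using sub by (simp add: Int_absorb2)
  also have "integral cube (\<lambda>x. \<epsilon>) = \<epsilon> * measure lborel cube"
    by (simp add: cube_def)
  finally show ?thesis .
qed

lemma integral_shrunk_ball_le:
  "integral (ball x0 (R - \<eta>)) (\<lambda>x. norm (grad_x (t, x)))
    \<le> exp ((real CARD('n) - 1) * integral {0..t} \<alpha>) * integral (ball x0 (R + t * M)) (\<lambda>x. norm (grad_x (0, x)))"
proof (rule field_le_epsilon_mult)
  define A where "A = integral {0..t} \<alpha>"
  have "0 \<le> A"
    unfolding A_def by (rule integral_alpha_nonneg[OF t_range(2)])
  then show "0 \<le> exp ((real CARD('n) - 1) * A) * (measure lborel cube * (1 + A))"
    by simp
  fix \<epsilon> :: real
  assume "0 < \<epsilon>"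
  have "integral (ball x0 (R - \<eta>)) (\<lambda>x. norm (grad_x (t, x)))
      \<le> exp ((real CARD('n) - 1) * A) * (energy \<epsilon> 0 + \<epsilon> * measure lborel cube * A)"
    using integral_ball_le_energy[OF \<open>0 < \<epsilon>\<close>] energy_gronwall[OF \<open>0 < \<epsilon>\<close>] by (simp add: A_def)
  also have "\<dots> \<le> exp ((real CARD('n) - 1) * A) *
      (integral (ball x0 (R + t * M)) (\<lambda>x. norm (grad_x (0, x))) + \<epsilon> * measure lborel cube + \<epsilon> * measure lborel cube * A)"
    using energy_0_le[OF \<open>0 < \<epsilon>\<close>] by simp
  finally show "integral (ball x0 (R - \<eta>)) (\<lambda>x. norm (grad_x (t, x)))
      \<le> exp ((real CARD('n) - 1) * A) * integral (ball x0 (R + t * M)) (\<lambda>x. norm (grad_x (0, x)))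
        + \<epsilon> * (exp ((real CARD('n) - 1) * A) * (measure lborel cube * (1 + A)))"
    by (simp add: algebra_simps)
qed

end

section \<open>The gradient estimate\<close>

context transport_OSL
begin

lemma ball_estimate:
  assumes "t \<in> {0..T}" "0 < R"
  shows "(LINT x : ball x0 R | lborel. norm (grad_x (t, x)))
    \<le> exp ((real CARD('n) - 1) * integral {0..t} \<alpha>) * (LINT x : ball x0 (R + t * M) | lborel. norm (grad_x (0, x)))"
proof (rule set_integral_ball_le_of_smaller_balls)
  have continuous: "continuous_on X (\<lambda>x. norm (grad_x (s, x)))" if "s \<in> {0..T}" for X s
    using that by (intro continuous_on_norm continuous_on_slice continuous_on_grad_x)
  then show "continuous_on UNIV (\<lambda>x. norm (grad_x (t, x)))"
    using assms(1) .
  fix \<eta>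
  assume "0 < \<eta>" "\<eta> < R"
  interpret cone: transport_OSL_cone T M a Da u Du D2u \<alpha> E t R \<eta> x0
    by (intro transport_OSL_cone.intro transport_OSL_axioms transport_OSL_cone_axioms.intro)
      (use assms \<open>0 < \<eta>\<close> \<open>\<eta> < R\<close> in auto)
  have "(LINT x : ball x0 (R - \<eta>) | lborel. norm (grad_x (t, x))) = integral (ball x0 (R - \<eta>)) (\<lambda>x. norm (grad_x (t, x)))"
    using assms by (intro set_integral_ball_eq_integral continuous) auto
  also have "\<dots> \<le> exp ((real CARD('n) - 1) * integral {0..t} \<alpha>) * integral (ball x0 (R + t * M)) (\<lambda>x. norm (grad_x (0, x)))"
    by (rule cone.integral_shrunk_ball_le)
  also have "integral (ball x0 (R + t * M)) (\<lambda>x. norm (grad_x (0, x))) = (LINT x : ball x0 (R + t * M) | lborel. norm (grad_x (0, x)))"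
    using T_pos by (intro set_integral_ball_eq_integral[symmetric] continuous) auto
  finally show "(LINT x : ball x0 (R - \<eta>) | lborel. norm (grad_x (t, x)))
      \<le> exp ((real CARD('n) - 1) * integral {0..t} \<alpha>) * (LINT x : ball x0 (R + t * M) | lborel. norm (grad_x (0, x)))" .
qed (rule assms(2))

lemma ball_estimate_l1:
  assumes "t \<in> {0..T}" "0 < R"
  shows "(LINT x : ball x0 R | lborel. (\<Sum>i\<in>UNIV. \<bar>Du (t, x) (0, axis i 1)\<bar>))
    \<le> sqrt (real CARD('n)) * exp ((real CARD('n) - 1) * integral {0..t} \<alpha>) *
      (LINT x : ball x0 (R + t * M) | lborel. (\<Sum>i\<in>UNIV. \<bar>Du (0, x) (0, axis i 1)\<bar>))"
proof -
  have continuous: "continuous_on X (\<lambda>x. norm (grad_x (s, x)))" "continuous_on X (\<lambda>x. \<Sum>i\<in>UNIV. \<bar>Du (s, x) (0, axis i 1)\<bar>)"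
    if "s \<in> {0..T}" for X s
    using that by (intro continuous_intros continuous_on_slice continuous_on_grad_x continuous_on_Du; simp)+
  have "(LINT x : ball x0 R | lborel. (\<Sum>i\<in>UNIV. \<bar>Du (t, x) (0, axis i 1)\<bar>))
      \<le> (LINT x : ball x0 R | lborel. sqrt (real CARD('n)) * norm (grad_x (t, x)))"
    using assms l1_norm_le_sqrt_card_norm[of "grad_x (t, _)"]
    by (intro set_integral_mono set_integrable_ball continuous continuous_intros) (auto simp: grad_x_nth)
  also have "\<dots> = sqrt (real CARD('n)) * (LINT x : ball x0 R | lborel. norm (grad_x (t, x)))"
    by (rule set_integral_mult_right)
  also have "\<dots> \<le> sqrt (real CARD('n)) * (exp ((real CARD('n) - 1) * integral {0..t} \<alpha>) *
      (LINT x : ball x0 (R + t * M) | lborel. norm (grad_x (0, x))))"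
    using ball_estimate[OF assms] by (intro mult_left_mono) auto
  also have "(LINT x : ball x0 (R + t * M) | lborel. norm (grad_x (0, x)))
      \<le> (LINT x : ball x0 (R + t * M) | lborel. (\<Sum>i\<in>UNIV. \<bar>Du (0, x) (0, axis i 1)\<bar>))"
    using T_pos norm_le_l1_cart[of "grad_x (0, _)"]
    by (intro set_integral_mono set_integrable_ball continuous) (auto simp: grad_x_nth)
  finally show ?thesis
    by (simp add: mult_left_mono mult.assoc)
qed

end

theorem mainTheorem14:
  fixes T :: real
    and a :: "real \<times> (real ^ 'n) \<Rightarrow> real ^ 'n"
    and \<alpha> :: "real \<Rightarrow> real"
    and u :: "real \<times> (real ^ 'n) \<Rightarrow> real"
    and Du :: "real \<times> (real ^ 'n) \<Rightarrow> ((real \<times> (real ^ 'n)) \<Rightarrow>\<^sub>L real)"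
  assumes T_pos: "0 < T"
    and a_C1: "C1_on a ({0..T} \<times> UNIV)"
    and a_bounded: "bounded (a ` ({0..T} \<times> UNIV))"
    and alpha_int: "set_integrable lborel {0..T} \<alpha>"
    and alpha_nonneg: "AE s in lborel. s \<in> {0..T} \<longrightarrow> 0 \<le> \<alpha> s"
    and OSLC: "AE s in lborel. s \<in> {0..T} \<longrightarrow>
                 (\<forall>x y. inner (a (s, y) - a (s, x)) (y - x) \<le> \<alpha> s * (norm (y - x))\<^sup>2)"
    and u_C2: "has_C1_derivative_on u Du ({0..T} \<times> UNIV) \<and> C1_on Du ({0..T} \<times> UNIV)"
    and transport: "\<forall>p \<in> {0..T} \<times> UNIV. Du p (1, a p) = 0"
  shows "\<forall>t \<in> {0..T}. \<forall>x0 :: real ^ 'n. \<forall>R > 0.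
      (LINT x : ball x0 R | lborel. (\<Sum>i\<in>UNIV. \<bar>Du (t, x) (0, axis i 1)\<bar>))
      \<le> sqrt (real CARD('n)) * exp ((real CARD('n) - 1) * (LINT s : {0..t} | lborel. \<alpha> s))
         * (LINT x : ball x0 (R + t * (SUP p \<in> {0..T} \<times> UNIV. norm (a p))) | lborel.
              (\<Sum>i\<in>UNIV. \<bar>Du (0, x) (0, axis i 1)\<bar>))"
proof (intro ballI allI impI)
  fix t x0 R
  assume "t \<in> {0..T}" "(0::real) < R"
  obtain Da where Da: "has_C1_derivative_on a Da ({0..T} \<times> UNIV)"
    using a_C1 by (auto simp: C1_on_def)
  obtain D2u where D2u: "has_C1_derivative_on Du D2u ({0..T} \<times> UNIV)"
    using u_C2 by (auto simp: C1_on_def)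
  obtain E where "negligible E"
    and E: "\<And>s. s \<notin> E \<Longrightarrow> s \<in> {0..T} \<longrightarrow> 0 \<le> \<alpha> s \<and>
      (\<forall>x y. inner (a (s, y) - a (s, x)) (y - x) \<le> \<alpha> s * (norm (y - x))\<^sup>2)"
    using AE_conjI[OF alpha_nonneg OSLC] by (rule AE_lborel_negligible_exception) auto
  interpret transport_OSL T "SUP p \<in> {0..T} \<times> UNIV. norm (a p)" a Da u Du D2u \<alpha> E
    using T_pos Da a_bounded u_C2 D2u transport set_borel_integral_eq_integral(1)[OF alpha_int] \<open>negligible E\<close> E
    by unfold_locales (auto intro: norm_le_SUP_norm)
  have "(LINT s : {0..t} | lborel. \<alpha> s) = integral {0..t} \<alpha>"
    using \<open>t \<in> {0..T}\<close> by (intro set_borel_integral_eq_integral(2) set_integrable_subset[OF alpha_int]) auto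
  then show "(LINT x : ball x0 R | lborel. (\<Sum>i\<in>UNIV. \<bar>Du (t, x) (0, axis i 1)\<bar>))
      \<le> sqrt (real CARD('n)) * exp ((real CARD('n) - 1) * (LINT s : {0..t} | lborel. \<alpha> s))
         * (LINT x : ball x0 (R + t * (SUP p \<in> {0..T} \<times> UNIV. norm (a p))) | lborel.
              (\<Sum>i\<in>UNIV. \<bar>Du (0, x) (0, axis i 1)\<bar>))"
    using ball_estimate_l1[OF \<open>t \<in> {0..T}\<close> \<open>0 < R\<close>] by simp
qed

end
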